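(* Let $n \ge 3$ and let $S_{3,2}$ be the set of compositions of length $n-1$ of the form $\alpha = (3, 1, \ldots, 1, 2, 1, \ldots, 1)$ with first entry $3$, entry $2$ in position $k+1$ for some $k \in [1, n-2]$, and all other entries $1$. Then for every prime $p$, \begin{align*} \sum_{\alpha \in S_{3, 2}} g_\alpha(p) &= \frac{1}{6(p-1)}\bigg(6(n-1)p^{2n-5} + (n-1)(n-2)(n-3)p^{n} - 3(n-1)(n-2)(n-4)p^{n-1} \\ &\quad +(n-1)(n-2)(5n-24) p^{n-2} - 3(n-1)(n-3)(n-4)p^{n-3}\bigg). \end{align*}
   Context: For a composition $\alpha=(e_1,\ldots,e_{n-1})$ (positive integers), $g_\alpha(p)$ is the number of $n\times n$ irreducible subring matrices with diagonal $(p^{e_1},\ldots,p^{e_{n-1}},1)$: upper triangular integer matrices $A$ with $A_{rr}=p^{e_r}$ ($r<n$), $A_{nn}=1$, last column $(1,\ldots,1)^T$, entries $A_{rs}=p\,a_{rs}$ for $1\le r<s\le n-1$ with integers $0\le p\,a_{rs}<p^{e_r}$, such that for all columns $v_i,v_j$ of $A$ the componentwise product $v_i\circ v_j$ lies in the $\mathbb{Z}$-column span of $A$. *)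

theory Defs
  imports Complex_Main "HOL-Computational_Algebra.Primes"
begin

text \<open>Matrices are represented 0-based as functions nat => nat => int, with
  entries outside the n x n block equal to 0. A composition is a list of
  positive naturals; alpha = (e_1,...,e_{n-1}) with n = length alpha + 1.\<close>

definition in_col_span :: "nat \<Rightarrow> (nat \<Rightarrow> nat \<Rightarrow> int) \<Rightarrow> (nat \<Rightarrow> int) \<Rightarrow> bool" where
  "in_col_span n A w \<longleftrightarrow> (\<exists>c :: nat \<Rightarrow> int. \<forall>r<n. w r = (\<Sum>s<n. c s * A r s))"

definition irred_subring_matrix :: "nat list \<Rightarrow> nat \<Rightarrow> (nat \<Rightarrow> nat \<Rightarrow> int) \<Rightarrow> bool" where
  "irred_subring_matrix \<alpha> p A \<longleftrightarrow>
     (let n = length \<alpha> + 1 in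
       (\<forall>r s. (n \<le> r \<or> n \<le> s) \<longrightarrow> A r s = 0) \<and>
       (\<forall>r<n. \<forall>s<r. A r s = 0) \<and>
       (\<forall>r<n - 1. A r r = int p ^ (\<alpha> ! r)) \<and>
       A (n - 1) (n - 1) = 1 \<and>
       (\<forall>r<n. A r (n - 1) = 1) \<and>
       (\<forall>r s. r < s \<and> s < n - 1 \<longrightarrow>
          int p dvd A r s \<and> 0 \<le> A r s \<and> A r s < int p ^ (\<alpha> ! r)) \<and>
       (\<forall>i<n. \<forall>j<n. in_col_span n A (\<lambda>r. A r i * A r j)))"

definition g :: "nat list \<Rightarrow> nat \<Rightarrow> nat" where
  "g \<alpha> p = card {A. irred_subring_matrix \<alpha> p A}"

definition is_composition :: "nat list \<Rightarrow> bool" where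
  "is_composition \<alpha> \<longleftrightarrow> (\<forall>e\<in>set \<alpha>. 0 < e)"

definition S32 :: "nat \<Rightarrow> nat list set" where
  "S32 n = {\<alpha>. is_composition \<alpha> \<and> length \<alpha> = n - 1 \<and> \<alpha> ! 0 = 3 \<and>
             (\<exists>k\<in>{1..n-2}. \<alpha> ! k = 2 \<and> (\<forall>i<n - 1. i \<noteq> 0 \<and> i \<noteq> k \<longrightarrow> \<alpha> ! i = 1))}"

end

theory Submission
  imports Defs "HOL-Number_Theory.Cong" "HOL-Library.FuncSet"
begin

text \<open>For \<open>\<alpha> = (3, 1, \<dots>, 1, 2, 1, \<dots>, 1)\<close> with the entry 2 in row \<open>k\<close>, the only free
  entries of a subring matrix are \<open>p a\<^sub>s\<close> in row 0 (with \<open>0 \<le> a\<^sub>s < p\<^sup>2\<close>) and \<open>p b\<^sub>s\<close> in row \<open>k\<close>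
  for columns \<open>s > k\<close> (with \<open>0 \<le> b\<^sub>s < p\<close>); all other rows have diagonal \<open>p\<close>, which forces
  their off-diagonal entries to vanish. Closure under componentwise products becomes:
  \<open>p | a\<^sub>k\<close> and, writing \<open>a\<^sub>k = p u\<close> and \<open>a\<^sub>i \<equiv> x\<^sub>i (mod p)\<close>, the congruences
  \<open>x\<^sub>i x\<^sub>j \<equiv> u y\<^sub>i y\<^sub>j\<close> (\<open>i \<noteq> j\<close>) and \<open>x\<^sub>i\<^sup>2 - x\<^sub>i \<equiv> u (y\<^sub>i\<^sup>2 - y\<^sub>i)\<close> modulo \<open>p\<close>,
  where \<open>y = b\<close>.
  The high digits of the \<open>a\<^sub>i\<close> are free and contribute \<open>p\<^sup>n\<^sup>-\<^sup>3\<close>.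

  The congruences say that the vectors \<open>(x\<^sub>i, y\<^sub>i)\<close> are orthogonal for the form
  \<open>x x' - u y y'\<close> over \<open>\<bbbF>\<^sub>p\<close>. Three pairwise orthogonal nonzero such vectors in a plane force
  the degenerate solution \<open>u = 1, x = y\<close>; so apart from the solutions with \<open>u = 0\<close>
  (orthogonal idempotents) and \<open>u = 1, x = y\<close>, every solution is supported on at most two
  indices, and one- and two-point solutions are counted directly.\<close>

definition Pi0 :: "nat set \<Rightarrow> int set \<Rightarrow> (nat \<Rightarrow> int) set" where
  "Pi0 I V = {f. (\<forall>i\<in>I. f i \<in> V) \<and> (\<forall>i. i \<notin> I \<longrightarrow> f i = 0)}"

lemma card_Pi0:
  assumes "finite I" shows "card (Pi0 I V) = card V ^ card I"
proof -
  have "bij_betw (\<lambda>f. restrict f I) (Pi0 I V) (I \<rightarrow>\<^sub>E V)"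
  proof (rule bij_betw_byWitness[where f'="\<lambda>f i. if i \<in> I then f i else 0"])
    show "\<forall>a\<in>Pi0 I V. (\<lambda>i. if i \<in> I then restrict a I i else 0) = a"
      by (auto simp: Pi0_def fun_eq_iff)
    show "\<forall>a'\<in>I \<rightarrow>\<^sub>E V. restrict (\<lambda>i. if i \<in> I then a' i else 0) I = a'"
      by (auto simp: fun_eq_iff PiE_def extensional_def)
    show "(\<lambda>f. restrict f I) ` Pi0 I V \<subseteq> I \<rightarrow>\<^sub>E V" by (auto simp: Pi0_def)
    show "(\<lambda>f i. if i \<in> I then f i else 0) ` (I \<rightarrow>\<^sub>E V) \<subseteq> Pi0 I V" by (auto simp: Pi0_def)
  qed
  then have "card (Pi0 I V) = card (I \<rightarrow>\<^sub>E V)" by (rule bij_betw_same_card)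
  also have "\<dots> = card V ^ card I" using assms by (rule card_funcsetE)
  finally show ?thesis .
qed

lemma finite_Pi0: assumes "finite I" "finite V" shows "finite (Pi0 I V)"
proof -
  have "Pi0 I V \<subseteq> (\<lambda>f i. if i \<in> I then f i else 0) ` (I \<rightarrow>\<^sub>E V)"
  proof
    fix f assume f: "f \<in> Pi0 I V"
    have "f = (\<lambda>i. if i \<in> I then restrict f I i else 0)" using f by (auto simp: Pi0_def fun_eq_iff)
    moreover have "restrict f I \<in> I \<rightarrow>\<^sub>E V" using f by (auto simp: Pi0_def)
    ultimately show "f \<in> (\<lambda>f i. if i \<in> I then f i else 0) ` (I \<rightarrow>\<^sub>E V)" by blast
  qed
  moreover have "finite (I \<rightarrow>\<^sub>E V)" using assms by (simp add: finite_PiE)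
  ultimately show ?thesis by (meson finite_surj)
qed

definition single_entry :: "nat \<Rightarrow> int \<Rightarrow> nat \<Rightarrow> int" where
  "single_entry j c = (\<lambda>i. if i = j then c else 0)"

definition two_entries :: "nat \<Rightarrow> nat \<Rightarrow> int \<Rightarrow> int \<Rightarrow> nat \<Rightarrow> int" where
  "two_entries j l a c = (\<lambda>i. if i = j then a else if i = l then c else 0)"

lemma single_entry_same [simp]: "single_entry j c j = c"
  by (simp add: single_entry_def)

lemma two_entries_same [simp]: "two_entries j l a c j = a" "j \<noteq> l \<Longrightarrow> two_entries j l a c l = c"
  by (simp_all add: two_entries_def)

lemma single_entry_inject: "c \<noteq> 0 \<Longrightarrow> single_entry i c = single_entry j c \<longleftrightarrow> i = j"
  by (auto simp: single_entry_def fun_eq_iff)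

lemma card_offdiag:
  assumes "finite A" shows "card {(a, b). a \<in> A \<and> b \<in> A \<and> a \<noteq> b} = card A * card A - card A"
proof -
  have "{(a, b). a \<in> A \<and> b \<in> A \<and> a \<noteq> b} = A \<times> A - (\<lambda>a. (a, a)) ` A" by auto
  moreover have "card ((\<lambda>a. (a, a)) ` A) = card A" by (rule card_image) (auto simp: inj_on_def)
  ultimately show ?thesis
    using assms by (simp add: card_Diff_subset card_cartesian_product image_subset_iff)
qed

definition ord_pairs :: "'a::linorder set \<Rightarrow> ('a \<times> 'a) set" where
  "ord_pairs Q = {(j, l). j \<in> Q \<and> l \<in> Q \<and> j < l}"

lemma finite_ord_pairs: "finite Q \<Longrightarrow> finite (ord_pairs Q)"
  by (rule finite_subset[of _ "Q \<times> Q"]) (auto simp: ord_pairs_def)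

lemma card_ord_pairs: assumes "finite Q" shows "2 * card (ord_pairs Q) = card Q * card Q - card Q"
proof -
  have offdiag: "{(a, b). a \<in> Q \<and> b \<in> Q \<and> a \<noteq> b} = ord_pairs Q \<union> prod.swap ` ord_pairs Q"
    by (auto simp: ord_pairs_def image_iff neq_iff)
  have "card (prod.swap ` ord_pairs Q) = card (ord_pairs Q)" by (rule card_image) simp
  moreover have "ord_pairs Q \<inter> prod.swap ` ord_pairs Q = {}" by (auto simp: ord_pairs_def)
  ultimately have "card {(a, b). a \<in> Q \<and> b \<in> Q \<and> a \<noteq> b} = 2 * card (ord_pairs Q)"
    unfolding offdiag using finite_ord_pairs[OF assms] by (subst card_Un_disjoint) auto
  thus ?thesis using card_offdiag[OF assms] by simp
qed

lemma no_three_distinct_cases: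
  assumes "\<And>i j l. i \<in> S \<Longrightarrow> j \<in> S \<Longrightarrow> l \<in> S \<Longrightarrow> i \<noteq> j \<Longrightarrow> j \<noteq> l \<Longrightarrow> i \<noteq> l \<Longrightarrow> False"
  shows "S = {} \<or> (\<exists>j. S = {j}) \<or> (\<exists>j l. j < (l::'a::linorder) \<and> S = {j, l})"
proof (cases "S = {}")
  case False
  then obtain j where j: "j \<in> S" by blast
  show ?thesis
  proof (cases "S = {j}")
    case False
    then obtain l where l: "l \<in> S" "l \<noteq> j" using j by blast
    have "S = {j, l}" using assms j l by blast
    thus ?thesis using l(2) by (cases "j < l") (auto simp: insert_commute neq_iff)
  qed auto
qed simp

lemma in_col_span_column: assumes "l < n" shows "in_col_span n A (\<lambda>r. A r l)"
  unfolding in_col_span_def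
proof (rule exI[of _ "\<lambda>s. if s = l then 1 else 0"], intro allI impI)
  fix r
  have "(\<Sum>s<n. (if s = l then 1 else 0) * A r s) = (\<Sum>s<n. if s = l then A r l else 0)"
    by (rule sum.cong) auto
  thus "A r l = (\<Sum>s<n. (if s = l then 1 else 0) * A r s)" using assms by simp
qed

lemma dvd_lin_comb: "(p::'a::comm_ring_1) dvd A \<Longrightarrow> p dvd B \<Longrightarrow> X = c * A + d * B \<Longrightarrow> p dvd X"
  by simp

lemma dvd_iff_if_dvd_diff: "(p::'a::comm_ring_1) dvd A - B \<Longrightarrow> p dvd A \<longleftrightarrow> p dvd B"
  by (metis diff_add_cancel dvd_add_right_iff)

lemma div_less_if_less_square: assumes "0 < (q::int)" "x < q * q" shows "x div q < q"
proof (rule ccontr)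
  assume "\<not> x div q < q"
  hence "q * q \<le> q * (x div q)" using assms(1) by (intro mult_left_mono) auto
  also have "\<dots> = x - x mod q" by (simp add: minus_mod_eq_mult_div)
  also have "\<dots> \<le> x" using pos_mod_sign[OF assms(1), of x] by simp
  finally show False using assms(2) by simp
qed

lemma div_range_if_dvd:
  assumes "0 < (q::int)" "q dvd x" "0 \<le> x" "x < q * N" shows "0 \<le> x div q \<and> x div q < N"
  using assms by (auto elim!: dvdE simp: zero_le_mult_iff)

section \<open>Orthogonal systems modulo a prime\<close>

definition orth_sols_count :: "real \<Rightarrow> nat \<Rightarrow> real" where
  "orth_sols_count p B = (real B + 2) * p^B + (p - 2) + real B * (p^2 - 2 * p + 2)
     + real B * (real B - 1) / 2 * (p^2 - 3 * p + 4)"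

definition x_zero_sols_count :: "real \<Rightarrow> nat \<Rightarrow> real" where
  "x_zero_sols_count p B = p^B + (p - 1) * (real B + 1)"

locale prime_modulus =
  fixes p :: int
  assumes prime_p: "prime p"
begin

lemma p_ge_2: "p \<ge> 2" using prime_p by (simp add: prime_ge_2_int)

lemma p_dvd_mult_iff: "p dvd a * b \<longleftrightarrow> p dvd a \<or> p dvd b"
  using prime_p by (rule prime_dvd_mult_iff)

lemma residue_dvd_iff: "0 \<le> x \<Longrightarrow> x < p \<Longrightarrow> p dvd x \<longleftrightarrow> x = 0"
  using zdvd_not_zless[of x p] by (cases "x = 0") auto

lemma residue_pair_nonzero_iff:
  "a \<in> {0..<p} \<Longrightarrow> b \<in> {0..<p} \<Longrightarrow> (a, b) \<noteq> (0, 0) \<longleftrightarrow> \<not> (p dvd a \<and> p dvd b)"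
  using residue_dvd_iff by auto

lemma residue_eq_if_dvd_diff: assumes "u \<in> {0..<p}" "v \<in> {0..<p}" "p dvd u - v" shows "u = v"
proof -
  have "u mod p = v mod p" using assms(3) by (simp add: mod_eq_dvd_iff)
  thus ?thesis using assms(1,2) by simp
qed

lemma residue_idem_iff: assumes "0 \<le> x" "x < p" shows "p dvd x^2 - x \<longleftrightarrow> x = 0 \<or> x = 1"
proof -
  have "x^2 - x = x * (x - 1)" by (simp add: power2_eq_square algebra_simps)
  hence "p dvd x^2 - x \<longleftrightarrow> p dvd x \<or> p dvd (x - 1)" by (simp add: p_dvd_mult_iff)
  moreover have "p dvd x \<longleftrightarrow> x = 0" using residue_dvd_iff assms by auto
  moreover have "p dvd (x - 1) \<longleftrightarrow> x = 1"
  proof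
    assume "p dvd x - 1"
    show "x = 1"
    proof (cases "x = 0")
      case True
      with \<open>p dvd x - 1\<close> have "p dvd 1" by (simp add: dvd_minus_iff)
      with p_ge_2 show ?thesis by (simp add: zdvd1_eq)
    next
      case False
      with \<open>p dvd x - 1\<close> show ?thesis using residue_eq_if_dvd_diff[of x 1] assms p_ge_2 by auto
    qed
  qed simp
  ultimately show ?thesis by auto
qed

lemma residue_solve_ex: assumes "\<not> p dvd c" shows "\<exists>u\<in>{0..<p}. p dvd d - u * c"
proof -
  have "coprime c p" using prime_imp_coprime_int[OF prime_p assms] by (simp add: coprime_commute)
  then obtain t where t: "[c * t = 1] (mod p)" using cong_solve_coprime_int by blast
  have "[((d * t) mod p) * c = d * (c * t)] (mod p)"
    by (metis cong_mod_left cong_refl cong_scalar_right mult.assoc mult.commute)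
  also have "[d * (c * t) = d] (mod p)" using cong_scalar_left[OF t, of d] by simp
  finally have "p dvd d - ((d * t) mod p) * c" by (simp add: cong_iff_dvd_diff dvd_diff_commute)
  moreover have "(d * t) mod p \<in> {0..<p}" using p_ge_2 by simp
  ultimately show ?thesis by blast
qed

lemma residue_solve_unique:
  assumes "\<not> p dvd c" "u \<in> {0..<p}" "v \<in> {0..<p}" "p dvd d - u * c" "p dvd d - v * c"
  shows "u = v"
proof -
  have "p dvd (d - v * c) - (d - u * c)" using assms(4,5) by (rule dvd_diff[rotated])
  hence "p dvd (u - v) * c" by (simp add: algebra_simps)
  hence "p dvd u - v" using assms(1) p_dvd_mult_iff by blast
  thus ?thesis using residue_eq_if_dvd_diff assms(2,3) by blast
qed

lemma card_Pi0_residues: "finite Q \<Longrightarrow> int (card (Pi0 Q {0..<p})) = p ^ card Q"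
  using card_Pi0[of Q "{0..<p}"] p_ge_2 by simp

definition orth_idems :: "nat set \<Rightarrow> (nat \<Rightarrow> int) set" where
  "orth_idems Q = {x \<in> Pi0 Q {0..<p}. (\<forall>i\<in>Q. p dvd x i ^ 2 - x i) \<and>
     (\<forall>i\<in>Q. \<forall>j\<in>Q. i \<noteq> j \<longrightarrow> p dvd x i * x j)}"

lemma orth_idems_eq: "orth_idems Q = insert (\<lambda>_. 0) ((\<lambda>j. single_entry j 1) ` Q)"
proof (rule set_eqI, rule iffI)
  fix x assume x: "x \<in> orth_idems Q"
  hence r: "\<forall>i\<in>Q. 0 \<le> x i \<and> x i < p" and z: "\<forall>i. i \<notin> Q \<longrightarrow> x i = 0"
    and idem: "\<forall>i\<in>Q. p dvd x i ^ 2 - x i" and orth: "\<forall>i\<in>Q. \<forall>j\<in>Q. i \<noteq> j \<longrightarrow> p dvd x i * x j"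
    by (auto simp: orth_idems_def Pi0_def)
  have v: "\<forall>i\<in>Q. x i = 0 \<or> x i = 1" using r idem residue_idem_iff by simp
  have "\<forall>i\<in>Q. \<forall>j\<in>Q. i \<noteq> j \<longrightarrow> x i = 0 \<or> x j = 0"
    using r orth p_dvd_mult_iff residue_dvd_iff by blast
  then have "x = single_entry j 1" if "j \<in> Q" "x j \<noteq> 0" for j
    using that v z by (auto simp: single_entry_def fun_eq_iff)
  moreover have "x = (\<lambda>_. 0)" if "\<forall>j\<in>Q. x j = 0" using that z by (auto simp: fun_eq_iff)
  ultimately show "x \<in> insert (\<lambda>_. 0) ((\<lambda>j. single_entry j 1) ` Q)" by blast
next
  fix x assume "x \<in> insert (\<lambda>_. 0) ((\<lambda>j. single_entry j 1) ` Q)"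
  then show "x \<in> orth_idems Q" using p_ge_2
    by (auto simp: orth_idems_def Pi0_def single_entry_def)
qed

lemma card_orth_idems: assumes "finite Q" shows "card (orth_idems Q) = card Q + 1"
proof -
  have "inj_on (\<lambda>j. single_entry j 1) Q" by (auto simp: inj_on_def single_entry_inject)
  moreover have "(\<lambda>_. 0) \<notin> (\<lambda>j. single_entry j 1) ` Q"
  proof
    assume "(\<lambda>_. 0) \<in> (\<lambda>j. single_entry j 1) ` Q"
    then obtain j where "(\<lambda>_. 0) = single_entry j 1" by blast
    then have "0 = single_entry j 1 j" by (rule fun_cong)
    thus False by (simp add: single_entry_def)
  qed
  ultimately show ?thesis unfolding orth_idems_eq using assms
    by (subst card_insert_disjoint) (auto simp: card_image)
qed

text \<open>Orthogonality, parallelism and isotropy below refer to vectors \<open>(x, y)\<close> modulo \<open>p\<close> and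
  the symmetric form \<open>x x' - u y y'\<close>.\<close>

lemma orth_to_common_imp_parallel:
  assumes u: "\<not> p dvd u" and nz: "\<not> (p dvd xl \<and> p dvd yl)"
    and o1: "p dvd xi * xl - u * yi * yl" and o2: "p dvd xj * xl - u * yj * yl"
  shows "p dvd xi * yj - xj * yi"
proof -
  have a: "p dvd xl * (xi * yj - xj * yi)"
    by (rule dvd_lin_comb[OF o1 o2, of _ yj "-yi"]) (simp add: algebra_simps)
  have b: "p dvd (u * yl) * (xi * yj - xj * yi)"
    by (rule dvd_lin_comb[OF o1 o2, of _ xj "-xi"]) (simp add: algebra_simps)
  show ?thesis
  proof (cases "p dvd xl")
    case False thus ?thesis using a p_dvd_mult_iff by blast
  next
    case True
    hence "\<not> p dvd u * yl" using nz u p_dvd_mult_iff by blast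
    thus ?thesis using b p_dvd_mult_iff by blast
  qed
qed

lemma parallel_orth_imp_isotropic:
  assumes nz: "\<not> (p dvd xj \<and> p dvd yj)"
    and o: "p dvd xi * xj - u * yi * yj" and par: "p dvd xi * yj - xj * yi"
  shows "p dvd xi^2 - u * yi^2"
proof -
  have "p dvd xj * (xi^2 - u * yi^2)"
    by (rule dvd_lin_comb[OF o par, of _ xi "u * yi"]) (simp add: algebra_simps power2_eq_square)
  moreover have "p dvd yj * (xi^2 - u * yi^2)"
    by (rule dvd_lin_comb[OF o par, of _ yi xi]) (simp add: algebra_simps power2_eq_square)
  ultimately show ?thesis using nz p_dvd_mult_iff by blast
qed

lemma isotropic_sol_imp_diagonal:
  assumes nz: "\<not> (p dvd xi \<and> p dvd yi)" and iso: "p dvd xi^2 - u * yi^2"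
    and sol: "p dvd xi^2 - xi - u * (yi^2 - yi)" and u: "\<not> p dvd u"
  shows "p dvd u - 1 \<and> p dvd xi - yi"
proof -
  have D: "p dvd xi - u * yi"
    by (rule dvd_lin_comb[OF iso sol, of _ 1 "-1"]) (simp add: algebra_simps)
  have "p dvd (u * (u - 1)) * (yi * yi)"
    by (rule dvd_lin_comb[OF iso D, of _ 1 "-(xi + u * yi)"]) (simp add: algebra_simps power2_eq_square)
  moreover have "\<not> p dvd yi"
  proof
    assume "p dvd yi"
    hence "p dvd xi" using D by (metis dvd_add dvd_mult diff_add_cancel)
    thus False using nz \<open>p dvd yi\<close> by blast
  qed
  ultimately have pu: "p dvd u - 1" using u p_dvd_mult_iff by blast
  have "p dvd xi - yi"
    by (rule dvd_lin_comb[OF D pu, of _ 1 yi]) (simp add: algebra_simps)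
  with pu show ?thesis by blast
qed

lemma orth_to_diagonal_imp_diagonal:
  assumes "p dvd u - 1" "p dvd xi - yi" "\<not> p dvd xi" "p dvd xi * xm - u * yi * ym"
  shows "p dvd xm - ym"
proof -
  have "p dvd (xi * xm - u * yi * ym) + (ym * yi) * (u - 1) + (-ym) * (xi - yi)"
    using assms by (intro dvd_add dvd_mult) auto
  moreover have "(xi * xm - u * yi * ym) + (ym * yi) * (u - 1) + (-ym) * (xi - yi) = xi * (xm - ym)"
    by (simp add: algebra_simps)
  ultimately have "p dvd xi * (xm - ym)" by simp
  thus ?thesis using assms(3) p_dvd_mult_iff by blast
qed

definition sing_sols :: "(int \<times> int \<times> int) set" where
  "sing_sols = {(u, a, b). u \<in> {1..<p} \<and> a \<in> {0..<p} \<and> b \<in> {0..<p} \<and> (a, b) \<noteq> (0, 0) \<and>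
      p dvd a^2 - a - u * (b^2 - b) \<and> \<not> (u = 1 \<and> a = b)}"

lemma finite_sing_sols: "finite sing_sols"
  by (rule finite_subset[of _ "{1..<p} \<times> {0..<p} \<times> {0..<p}"]) (auto simp: sing_sols_def)

lemma sing_sols_small_b:
  "{(u, a, b) \<in> sing_sols. b \<in> {0, 1}} = {1..<p} \<times> {(1, 0), (0, 1)} \<union> {2..<p} \<times> {(1, 1)}"
proof (rule set_eqI, clarify)
  fix u a b :: int
  have "a = 0 \<or> a = 1" if "a \<in> {0..<p}" "p dvd a^2 - a - u * (b^2 - b)" "b = 0 \<or> b = 1"
    using that residue_idem_iff by auto
  then show "(u, a, b) \<in> {(u, a, b) \<in> sing_sols. b \<in> {0, 1}} \<longleftrightarrow>
      (u, a, b) \<in> {1..<p} \<times> {(1, 0), (0, 1)} \<union> {2..<p} \<times> {(1, 1)}"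
    using p_ge_2 by (auto simp: sing_sols_def)
qed

lemma sing_sols_large_b:
  "(\<lambda>(u, a, b). (a, b)) ` {(u, a, b) \<in> sing_sols. b \<notin> {0, 1}} =
     {(a, b). a \<in> {2..<p} \<and> b \<in> {2..<p} \<and> a \<noteq> b}"
proof (rule set_eqI, rule iffI)
  fix ab assume "ab \<in> (\<lambda>(u, a, b). (a, b)) ` {(u, a, b) \<in> sing_sols. b \<notin> {0, 1}}"
  then obtain u a b where ab: "ab = (a, b)" and h: "u \<in> {1..<p}" "a \<in> {0..<p}" "b \<in> {0..<p}"
    "p dvd a^2 - a - u * (b^2 - b)" "\<not> (u = 1 \<and> a = b)" "b \<notin> {0, 1}"
    by (auto simp: sing_sols_def)
  have nb: "\<not> p dvd b^2 - b" using residue_idem_iff[of b] h by auto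
  have "a \<notin> {0, 1}"
  proof
    assume "a \<in> {0, 1}"
    hence "p dvd u * (b^2 - b)" using h(4) by (auto simp: power2_eq_square)
    thus False using nb h(1) p_dvd_mult_iff residue_dvd_iff by auto
  qed
  moreover have "a \<noteq> b"
  proof
    assume "a = b"
    hence "p dvd (1 - u) * (b^2 - b)" using h(4) by (simp add: algebra_simps)
    hence "u = 1" using nb h(1) p_dvd_mult_iff residue_eq_if_dvd_diff[of 1 u] p_ge_2
      by (auto simp: dvd_diff_commute)
    thus False using h(5) \<open>a = b\<close> by simp
  qed
  ultimately show "ab \<in> {(a, b). a \<in> {2..<p} \<and> b \<in> {2..<p} \<and> a \<noteq> b}" using ab h by auto
next
  fix ab assume "ab \<in> {(a, b). a \<in> {2..<p} \<and> b \<in> {2..<p} \<and> a \<noteq> b}"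
  then obtain a b where ab: "ab = (a, b)" "a \<in> {2..<p}" "b \<in> {2..<p}" "a \<noteq> b" by auto
  have "\<not> p dvd b^2 - b" using residue_idem_iff[of b] ab by auto
  then obtain u where u: "u \<in> {0..<p}" "p dvd (a^2 - a) - u * (b^2 - b)"
    using residue_solve_ex by blast
  have "u \<noteq> 0" using u residue_idem_iff[of a] ab by auto
  hence "(u, a, b) \<in> {(u, a, b) \<in> sing_sols. b \<notin> {0, 1}}" using u ab by (auto simp: sing_sols_def)
  thus "ab \<in> (\<lambda>(u, a, b). (a, b)) ` {(u, a, b) \<in> sing_sols. b \<notin> {0, 1}}" using ab by force
qed

lemma inj_on_sing_sols_large_b: "inj_on (\<lambda>(u, a, b). (a, b)) {(u, a, b) \<in> sing_sols. b \<notin> {0, 1}}"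
proof (rule inj_onI)
  fix s t assume "s \<in> {(u, a, b) \<in> sing_sols. b \<notin> {0, 1}}" "t \<in> {(u, a, b) \<in> sing_sols. b \<notin> {0, 1}}"
    and "(\<lambda>(u, a, b). (a, b)) s = (\<lambda>(u, a, b). (a, b)) t"
  then obtain u u' a b where st: "s = (u, a, b)" "t = (u', a, b)"
    and h: "(u, a, b) \<in> sing_sols" "(u', a, b) \<in> sing_sols" "b \<notin> {0, 1}" by auto
  hence "\<not> p dvd b^2 - b" using residue_idem_iff[of b] by (auto simp: sing_sols_def)
  hence "u = u'" using residue_solve_unique[of "b^2 - b" u u' "a^2 - a"] h
    by (auto simp: sing_sols_def diff_diff_eq)
  thus "s = t" using st by simp
qed

lemma card_sing_sols: "int (card sing_sols) = p^2 - 2 * p + 2"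
proof -
  let ?small = "{(u, a, b) \<in> sing_sols. b \<in> {0, 1}}"
  let ?large = "{(u, a, b) \<in> sing_sols. b \<notin> {0, 1}}"
  have "finite ?small" "finite ?large" by (rule finite_subset[OF _ finite_sing_sols], auto)+
  hence "card sing_sols = card ?small + card ?large"
    by (subst card_Un_disjoint[symmetric]) (auto intro: arg_cong[where f = card])
  also have "card ?small = nat (p - 1) * 2 + nat (p - 2)"
    unfolding sing_sols_small_b by (subst card_Un_disjoint) (auto simp: card_cartesian_product)
  also have "card ?large = nat (p - 2) * nat (p - 2) - nat (p - 2)"
    using card_image[OF inj_on_sing_sols_large_b] card_offdiag[of "{2..<p}"]
    unfolding sing_sols_large_b by simp
  finally show ?thesis
    using p_ge_2 le_square[of "nat (p - 2)"] by (simp add: of_nat_diff power2_eq_square algebra_simps)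
qed

definition pair_sols :: "(int \<times> int \<times> int \<times> int \<times> int) set" where
  "pair_sols = {(u, a1, b1, a2, b2). u \<in> {1..<p} \<and> a1 \<in> {0..<p} \<and> b1 \<in> {0..<p} \<and>
      a2 \<in> {0..<p} \<and> b2 \<in> {0..<p} \<and> (a1, b1) \<noteq> (0, 0) \<and> (a2, b2) \<noteq> (0, 0) \<and>
      p dvd a1^2 - a1 - u * (b1^2 - b1) \<and> p dvd a2^2 - a2 - u * (b2^2 - b2) \<and>
      p dvd a1 * a2 - u * b1 * b2 \<and> \<not> (u = 1 \<and> a1 = b1 \<and> a2 = b2)}"

lemma pair_sols_first_off_diagonal: assumes "(u,a1,b1,a2,b2) \<in> pair_sols" shows "a1 \<noteq> b1"
proof
  assume e: "a1 = b1"
  have h: "u \<in> {1..<p}" "a1 \<in> {0..<p}" "b1 \<in> {0..<p}" "a2 \<in> {0..<p}" "b2 \<in> {0..<p}"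
      "(a1,b1) \<noteq> (0,0)" "(a2,b2) \<noteq> (0,0)"
      "p dvd a1^2 - a1 - u*(b1^2 - b1)" "p dvd a2^2 - a2 - u*(b2^2 - b2)"
      "p dvd a1*a2 - u*b1*b2" "\<not> (u = 1 \<and> a1 = b1 \<and> a2 = b2)" using assms by (auto simp: pair_sols_def)
  have nz1: "\<not> (p dvd a1 \<and> p dvd b1)" and nz2: "\<not> (p dvd a2 \<and> p dvd b2)" using h residue_pair_nonzero_iff by auto
  have pu: "\<not> p dvd u" using h residue_dvd_iff by auto
  show False
  proof (cases "u = 1")
    case True
    have iso: "p dvd a1^2 - u*b1^2" using True e by simp
    from isotropic_sol_imp_diagonal[OF nz1 iso h(8) pu] have "p dvd u - 1" "p dvd a1 - b1" by auto
    have "\<not> p dvd a1" using nz1 e by auto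
    have "p dvd a2 - b2" by (rule orth_to_diagonal_imp_diagonal[OF \<open>p dvd u - 1\<close> \<open>p dvd a1 - b1\<close> \<open>\<not> p dvd a1\<close> h(10)])
    hence "a2 = b2" using residue_eq_if_dvd_diff h by auto
    thus False using h(11) True e by simp
  next
    case False
    have "\<not> p dvd u - 1" using False h(1) residue_dvd_iff[of "u-1"] by auto
    moreover have "p dvd (u - 1) * (-(a1^2 - a1))" using h(8) e by (simp add: algebra_simps)
    ultimately have "p dvd -(a1^2 - a1)" using p_dvd_mult_iff by blast
    hence "p dvd a1^2 - a1" by (simp only: dvd_minus_iff)
    hence "a1 = 1" using residue_idem_iff h(2,6) e by auto
    hence o: "p dvd a2 - u*b2" using h(10) e by simp
    have "p dvd (u*(u-1))*(b2*b2)"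
      by (rule dvd_lin_comb[OF h(9) o, of _ 1 "-(a2 + u*b2 - 1)"]) (simp add: algebra_simps power2_eq_square)
    hence "p dvd b2" using pu \<open>\<not> p dvd u - 1\<close> p_dvd_mult_iff by blast
    hence "p dvd u*b2" by simp
    hence "p dvd a2" using o by (metis dvd_add diff_add_cancel)
    thus False using nz2 \<open>p dvd b2\<close> by blast
  qed
qed

lemma pair_sols_second_anisotropic: assumes "(u,a1,b1,a2,b2) \<in> pair_sols" shows "\<not> p dvd a2^2 - u*b2^2"
proof
  assume iso: "p dvd a2^2 - u*b2^2"
  have h: "u \<in> {1..<p}" "a1 \<in> {0..<p}" "b1 \<in> {0..<p}" "a2 \<in> {0..<p}" "b2 \<in> {0..<p}"
      "(a1,b1) \<noteq> (0,0)" "(a2,b2) \<noteq> (0,0)"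
      "p dvd a1^2 - a1 - u*(b1^2 - b1)" "p dvd a2^2 - a2 - u*(b2^2 - b2)"
      "p dvd a1*a2 - u*b1*b2" "\<not> (u = 1 \<and> a1 = b1 \<and> a2 = b2)" using assms by (auto simp: pair_sols_def)
  have nz2: "\<not> (p dvd a2 \<and> p dvd b2)" using h residue_pair_nonzero_iff by auto
  have pu: "\<not> p dvd u" using h residue_dvd_iff by auto
  from isotropic_sol_imp_diagonal[OF nz2 iso h(9) pu] have a: "p dvd u - 1" "p dvd a2 - b2" by auto
  have "\<not> p dvd a2" using nz2 a(2) by (metis dvd_diff_commute dvd_add_right_iff diff_add_cancel)
  moreover have "p dvd a2*a1 - u*b2*b1" using h(10) by (simp add: ac_simps)
  ultimately have "p dvd a1 - b1" using orth_to_diagonal_imp_diagonal a by blast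
  hence "a1 = b1" using residue_eq_if_dvd_diff h by auto
  thus False using pair_sols_first_off_diagonal assms by blast
qed

lemma pair_sols_second_norm:
  assumes par: "p dvd a2*d2 - c2*b2" and sa: "p dvd a2^2 - a2 - u*(b2^2 - b2)"
    and sc: "p dvd c2^2 - c2 - u*(d2^2 - d2)" and an: "\<not> p dvd a2^2 - u*b2^2"
  shows "p dvd (c2^2 - u*d2^2) - (a2*c2 - u*b2*d2)"
proof -
  let ?N = "a2^2 - u*b2^2" and ?N' = "c2^2 - u*d2^2" and ?B = "a2*c2 - u*b2*d2"
  have e1: "p dvd c2*?N - a2*?B"
    by (rule dvd_lin_comb[OF par par, of _ "u*b2" 0]) (simp add: algebra_simps power2_eq_square)
  have e2: "p dvd d2*?N - b2*?B"
    by (rule dvd_lin_comb[OF par par, of _ a2 0]) (simp add: algebra_simps power2_eq_square)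
  have e3: "p dvd (c2 - u*d2)*?N - (a2 - u*b2)*?B"
    by (rule dvd_lin_comb[OF e1 e2, of _ 1 "-u"]) (simp add: algebra_simps)
  have "p dvd ((?N' - (c2 - u*d2)) * ?N + ((c2 - u*d2)*?N - (a2 - u*b2)*?B)) + ((a2 - u*b2) - ?N)*?B"
    using sa sc e3 by (intro dvd_add dvd_mult2) (auto simp: algebra_simps dvd_diff_commute)
  hence "p dvd ?N * (?N' - ?B)" by (simp add: algebra_simps)
  thus ?thesis using an p_dvd_mult_iff by blast
qed

text \<open>Both second vectors are orthogonal to the first one, hence parallel; on a line through an
  anisotropic vector the equation \<open>x\<^sup>2 - x \<equiv> u (y\<^sup>2 - y)\<close> has only one nonzero solution.\<close>

lemma pair_sols_second_unique: assumes "(u,a1,b1,a2,b2) \<in> pair_sols" "(u,a1,b1,c2,d2) \<in> pair_sols" shows "a2 = c2 \<and> b2 = d2"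
proof -
  have h: "u \<in> {1..<p}" "a1 \<in> {0..<p}" "b1 \<in> {0..<p}" "a2 \<in> {0..<p}" "b2 \<in> {0..<p}"
      "(a1,b1) \<noteq> (0,0)" "p dvd a2^2 - a2 - u*(b2^2 - b2)"
      "p dvd a1*a2 - u*b1*b2" using assms(1) by (auto simp: pair_sols_def)
  have h': "c2 \<in> {0..<p}" "d2 \<in> {0..<p}" "p dvd c2^2 - c2 - u*(d2^2 - d2)"
      "p dvd a1*c2 - u*b1*d2" using assms(2) by (auto simp: pair_sols_def)
  have nz1: "\<not> (p dvd a1 \<and> p dvd b1)" using h residue_pair_nonzero_iff by auto
  have pu: "\<not> p dvd u" using h residue_dvd_iff by auto
  have o1: "p dvd a2*a1 - u*b2*b1" using h(8) by (simp add: ac_simps)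
  have o2: "p dvd c2*a1 - u*d2*b1" using h'(4) by (simp add: ac_simps)
  have par: "p dvd a2*d2 - c2*b2" by (rule orth_to_common_imp_parallel[OF pu nz1 o1 o2])
  have par': "p dvd c2*b2 - a2*d2" using par by (simp add: dvd_diff_commute)
  have an: "\<not> p dvd a2^2 - u*b2^2" using pair_sols_second_anisotropic assms(1) by blast
  have an': "\<not> p dvd c2^2 - u*d2^2" using pair_sols_second_anisotropic assms(2) by blast
  have x1: "p dvd (c2^2 - u*d2^2) - (a2*c2 - u*b2*d2)" by (rule pair_sols_second_norm[OF par h(7) h'(3) an])
  have x2: "p dvd (a2^2 - u*b2^2) - (c2*a2 - u*d2*b2)" by (rule pair_sols_second_norm[OF par' h'(3) h(7) an'])
  have x2': "p dvd (a2^2 - u*b2^2) - (a2*c2 - u*b2*d2)" using x2 by (simp add: ac_simps)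
  let ?N = "a2^2 - u*b2^2" and ?B = "a2*c2 - u*b2*d2"
  have e1: "p dvd c2*?N - a2*?B"
    by (rule dvd_lin_comb[OF par par, of _ "u*b2" 0]) (simp add: algebra_simps power2_eq_square)
  have e2: "p dvd d2*?N - b2*?B"
    by (rule dvd_lin_comb[OF par par, of _ a2 0]) (simp add: algebra_simps power2_eq_square)
  have "p dvd ?N * (c2 - a2)"
    by (rule dvd_lin_comb[OF e1 x2', of _ 1 "-a2"]) (simp add: algebra_simps)
  hence "p dvd c2 - a2" using an p_dvd_mult_iff by blast
  hence "c2 = a2" using residue_eq_if_dvd_diff h h' by auto
  moreover have "p dvd ?N * (d2 - b2)"
    by (rule dvd_lin_comb[OF e2 x2', of _ 1 "-b2"]) (simp add: algebra_simps)
  hence "p dvd d2 - b2" using an p_dvd_mult_iff by blast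
  hence "d2 = b2" using residue_eq_if_dvd_diff h h' by auto
  ultimately show ?thesis by simp
qed

text \<open>The second vector is taken as \<open>t (u b, a)\<close>, orthogonal to \<open>(a, b)\<close>, with \<open>t\<close> solving
  the linear congruence to which the idempotent equation reduces.\<close>

lemma pair_sols_second_ex: assumes "(u,a,b) \<in> sing_sols" "a \<noteq> b" shows "\<exists>a2 b2. (u,a,b,a2,b2) \<in> pair_sols"
proof -
  have h: "u \<in> {1..<p}" "a \<in> {0..<p}" "b \<in> {0..<p}" "(a,b) \<noteq> (0,0)"
      "p dvd a^2 - a - u*(b^2 - b)" using assms by (auto simp: sing_sols_def)
  have nz1: "\<not> (p dvd a \<and> p dvd b)" using h residue_pair_nonzero_iff by auto
  have pu: "\<not> p dvd u" using h residue_dvd_iff by auto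
  have an: "\<not> p dvd a^2 - u*b^2"
  proof
    assume "p dvd a^2 - u*b^2"
    from isotropic_sol_imp_diagonal[OF nz1 this h(5) pu] have "p dvd a - b" by auto
    thus False using residue_eq_if_dvd_diff h assms(2) by auto
  qed
  let ?Nw = "u^2*b^2 - u*a^2" and ?Lw = "u*b - u*a"
  have "?Nw = (-u) * (a^2 - u*b^2)" by (simp add: algebra_simps power2_eq_square)
  hence nNw: "\<not> p dvd ?Nw" using an pu p_dvd_mult_iff by (metis dvd_minus_iff)
  obtain t where t: "t \<in> {0..<p}" "p dvd ?Lw - t*?Nw" using residue_solve_ex[OF nNw] by blast
  define a2 where "a2 = (t*u*b) mod p"
  define b2 where "b2 = (t*a) mod p"
  have ca: "[a2 = t*u*b] (mod p)" unfolding a2_def by (simp add: cong_def)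
  have cb: "[b2 = t*a] (mod p)" unfolding b2_def by (simp add: cong_def)
  have r: "a2 \<in> {0..<p}" "b2 \<in> {0..<p}" using p_ge_2 by (auto simp: a2_def b2_def)
  have "[a2^2 - a2 - u*(b2^2 - b2) = (t*u*b)^2 - t*u*b - u*((t*a)^2 - t*a)] (mod p)"
    by (intro cong_diff cong_mult cong_pow cong_refl ca cb)
  moreover have "(t*u*b)^2 - t*u*b - u*((t*a)^2 - t*a) = (-t) * (?Lw - t*?Nw)"
    by (simp add: algebra_simps power2_eq_square)
  ultimately have s2: "p dvd a2^2 - a2 - u*(b2^2 - b2)" using t(2)
    by (metis cong_0_iff cong_dvd_iff p_dvd_mult_iff)
  have "[a*a2 - u*b*b2 = a*(t*u*b) - u*b*(t*a)] (mod p)"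
    by (intro cong_diff cong_mult cong_refl ca cb)
  moreover have "a*(t*u*b) - u*b*(t*a) = 0" by (simp add: algebra_simps)
  ultimately have o: "p dvd a*a2 - u*b*b2" by (simp add: cong_0_iff)
  have nz2: "(a2,b2) \<noteq> (0,0)"
  proof
    assume "(a2,b2) = (0,0)"
    hence "[0 = t*u*b] (mod p)" "[0 = t*a] (mod p)" using ca cb by auto
    hence z: "p dvd t*u*b" "p dvd t*a" by (metis cong_0_iff cong_sym)+
    have "\<not> p dvd t"
    proof
      assume "p dvd t"
      hence "p dvd ?Lw" using t(2) by (metis dvd_mult2 dvd_diff_commute dvd_add_right_iff diff_add_cancel)
      hence "p dvd u * (b - a)" by (simp add: algebra_simps)
      hence "p dvd b - a" using pu p_dvd_mult_iff by blast
      thus False using residue_eq_if_dvd_diff h assms(2) by auto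
    qed
    hence "p dvd b" "p dvd a" using z pu p_dvd_mult_iff by (auto simp: mult.assoc)
    thus False using nz1 by blast
  qed
  show ?thesis
    using h r s2 o nz2 assms(2) unfolding pair_sols_def by blast
qed

lemma sing_sols_diag: "{(u, a, b) \<in> sing_sols. a = b} = {2..<p} \<times> {(1, 1)}"
proof (rule set_eqI, clarify)
  fix u a b :: int
  have "a = 1"
    if h: "u \<in> {1..<p}" "u \<noteq> 1" "a \<in> {0..<p}" "a \<noteq> 0" "p dvd a^2 - a - u * (a^2 - a)"
  proof -
    have "\<not> p dvd 1 - u" using h residue_dvd_iff[of "u - 1"] by (auto simp: dvd_diff_commute)
    moreover have "p dvd (1 - u) * (a^2 - a)" using h(5) by (simp add: algebra_simps)
    ultimately have "p dvd a^2 - a" using p_dvd_mult_iff by blast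
    thus ?thesis using residue_idem_iff h(3,4) by auto
  qed
  then show "(u, a, b) \<in> {(u, a, b) \<in> sing_sols. a = b} \<longleftrightarrow> (u, a, b) \<in> {2..<p} \<times> {(1, 1)}"
    using p_ge_2 by (auto simp: sing_sols_def)
qed

lemma card_pair_sols: "int (card pair_sols) = p^2 - 3 * p + 4"
proof -
  let ?first = "\<lambda>(u :: int, a1 :: int, b1 :: int, a2 :: int, b2 :: int). (u, a1, b1)"
  let ?diag = "{(u, a, b) \<in> sing_sols. a = b}"
  have inj: "inj_on ?first pair_sols"
  proof (rule inj_onI)
    fix x y assume "x \<in> pair_sols" "y \<in> pair_sols" "?first x = ?first y"
    thus "x = y" using pair_sols_second_unique by (cases x, cases y) fastforce
  qed
  have img: "?first ` pair_sols = sing_sols - ?diag"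
  proof (rule set_eqI, rule iffI)
    fix t assume "t \<in> ?first ` pair_sols"
    then obtain u a1 b1 a2 b2 where x: "(u, a1, b1, a2, b2) \<in> pair_sols" "t = (u, a1, b1)" by auto
    have "a1 \<noteq> b1" using pair_sols_first_off_diagonal x(1) by blast
    thus "t \<in> sing_sols - ?diag" using x by (auto simp: sing_sols_def pair_sols_def)
  next
    fix t assume "t \<in> sing_sols - ?diag"
    then obtain u a b where t: "t = (u, a, b)" "(u, a, b) \<in> sing_sols" "a \<noteq> b" by auto
    then obtain a2 b2 where "(u, a, b, a2, b2) \<in> pair_sols" using pair_sols_second_ex by blast
    thus "t \<in> ?first ` pair_sols" using t by force
  qed
  have diag_sub: "?diag \<subseteq> sing_sols" by auto
  have card_diag: "card ?diag = nat (p - 2)"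
    unfolding sing_sols_diag by (simp add: card_cartesian_product)
  have "card pair_sols = card (sing_sols - ?diag)" using card_image[OF inj] img by simp
  also have "\<dots> = card sing_sols - nat (p - 2)"
    using card_Diff_subset[OF finite_subset[OF diag_sub finite_sing_sols] diag_sub] card_diag by simp
  finally have "card pair_sols = card sing_sols - nat (p - 2)" .
  moreover have "nat (p - 2) \<le> card sing_sols"
    using card_mono[OF finite_sing_sols diag_sub] card_diag by simp
  ultimately show ?thesis using card_sing_sols p_ge_2 by (simp add: of_nat_diff)
qed

definition orth_sys :: "nat set \<Rightarrow> (nat \<Rightarrow> int) \<Rightarrow> int \<Rightarrow> (nat \<Rightarrow> int) \<Rightarrow> bool" where
  "orth_sys Q x u y \<longleftrightarrow> (\<forall>i\<in>Q. \<forall>j\<in>Q. i \<noteq> j \<longrightarrow> p dvd x i * x j - u * y i * y j) \<and>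
     (\<forall>i\<in>Q. p dvd x i ^ 2 - x i - u * (y i ^ 2 - y i))"

definition orth_sols :: "nat set \<Rightarrow> ((nat \<Rightarrow> int) \<times> int \<times> (nat \<Rightarrow> int)) set" where
  "orth_sols Q = {(x,u,y). x \<in> Pi0 Q {0..<p} \<and> u \<in> {0..<p} \<and> y \<in> Pi0 Q {0..<p} \<and> orth_sys Q x u y}"

definition generic_sols :: "nat set \<Rightarrow> ((nat \<Rightarrow> int) \<times> int \<times> (nat \<Rightarrow> int)) set" where
  "generic_sols Q = {(x,u,y). (x,u,y) \<in> orth_sols Q \<and> u \<noteq> 0 \<and> \<not> (u = 1 \<and> x = y)}"

definition joint_supp :: "(nat \<Rightarrow> int) \<Rightarrow> (nat \<Rightarrow> int) \<Rightarrow> nat set" where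
  "joint_supp x y = {i. x i \<noteq> 0 \<or> y i \<noteq> 0}"

text \<open>Two vectors orthogonal to a third nonzero one are parallel, hence isotropic, and an
  isotropic solution forces \<open>u = 1\<close> and \<open>x = y\<close>.\<close>

lemma joint_supp_no_three:
  assumes t: "(x,u,y) \<in> generic_sols Q" and i: "i \<in> joint_supp x y" and j: "j \<in> joint_supp x y" and l: "l \<in> joint_supp x y"
    and d: "i \<noteq> j" "j \<noteq> l" "i \<noteq> l"
  shows False
proof -
  have h: "x \<in> Pi0 Q {0..<p}" "u \<in> {0..<p}" "y \<in> Pi0 Q {0..<p}" "orth_sys Q x u y" "u \<noteq> 0" "\<not> (u = 1 \<and> x = y)"
    using t by (auto simp: generic_sols_def orth_sols_def)
  have inQ: "\<And>m. m \<in> joint_supp x y \<Longrightarrow> m \<in> Q" using h(1,3) by (auto simp: joint_supp_def Pi0_def)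
  have rng: "\<And>m. m \<in> Q \<Longrightarrow> x m \<in> {0..<p} \<and> y m \<in> {0..<p}" using h(1,3) by (auto simp: Pi0_def)
  have nz: "\<And>m. m \<in> joint_supp x y \<Longrightarrow> \<not> (p dvd x m \<and> p dvd y m)"
  proof -
    fix m assume "m \<in> joint_supp x y"
    hence "(x m, y m) \<noteq> (0,0)" by (auto simp: joint_supp_def)
    thus "\<not> (p dvd x m \<and> p dvd y m)" using residue_pair_nonzero_iff rng inQ \<open>m \<in> joint_supp x y\<close> by blast
  qed
  have orth: "\<And>a b. a \<in> Q \<Longrightarrow> b \<in> Q \<Longrightarrow> a \<noteq> b \<Longrightarrow> p dvd x a * x b - u * y a * y b"
    using h(4) by (auto simp: orth_sys_def)
  have inS: "\<And>a. a \<in> Q \<Longrightarrow> p dvd x a ^ 2 - x a - u * (y a ^ 2 - y a)"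
    using h(4) by (auto simp: orth_sys_def)
  have pu: "\<not> p dvd u" using h(2,5) residue_dvd_iff by auto
  have par: "p dvd x i * y j - x j * y i"
    by (rule orth_to_common_imp_parallel[OF pu nz[OF l] orth orth]) (use inQ i j l d in auto)
  have iso: "p dvd x i ^ 2 - u * y i ^ 2"
    by (rule parallel_orth_imp_isotropic[OF nz[OF j] orth par]) (use inQ i j d in auto)
  from isotropic_sol_imp_diagonal[OF nz[OF i] iso inS[OF inQ[OF i]] pu] have a: "p dvd u - 1" "p dvd x i - y i" by auto
  have u1: "u = 1" using residue_eq_if_dvd_diff[of u 1] a(1) h(2,5) p_ge_2 by auto
  have xi: "\<not> p dvd x i"
  proof
    assume xd: "p dvd x i"
    have "y i = x i - (x i - y i)" by simp
    hence "p dvd y i" using xd a(2) by (metis dvd_diff)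
    thus False using nz[OF i] xd by blast
  qed
  have "x = y"
  proof
    fix m show "x m = y m"
    proof (cases "m \<in> Q")
      case True
      have "p dvd x m - y m"
      proof (cases "m = i")
        case True thus ?thesis using a by simp
      next
        case False
        show ?thesis by (rule orth_to_diagonal_imp_diagonal[OF a xi orth]) (use True False inQ[OF i] in auto)
      qed
      thus ?thesis using residue_eq_if_dvd_diff rng True by blast
    next
      case False thus ?thesis using h(1,3) by (auto simp: Pi0_def)
    qed
  qed
  thus False using h(6) u1 by simp
qed


lemma orth_sys_single_entry: assumes "j \<in> Q"
  shows "orth_sys Q (single_entry j a) u (single_entry j b) \<longleftrightarrow> p dvd a^2 - a - u*(b^2 - b)"
  using assms by (auto simp: orth_sys_def single_entry_def)


lemma orth_sys_two_entries: assumes "j \<in> Q" "l \<in> Q" "j \<noteq> l"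
  shows "orth_sys Q (two_entries j l a1 a2) u (two_entries j l b1 b2) \<longleftrightarrow>
    p dvd a1^2 - a1 - u*(b1^2 - b1) \<and> p dvd a2^2 - a2 - u*(b2^2 - b2) \<and> p dvd a1*a2 - u*b1*b2"
proof
  assume s: "orth_sys Q (two_entries j l a1 a2) u (two_entries j l b1 b2)"
  have "p dvd two_entries j l a1 a2 j * two_entries j l a1 a2 l - u * two_entries j l b1 b2 j * two_entries j l b1 b2 l"
    using s assms unfolding orth_sys_def by blast
  moreover have "p dvd two_entries j l a1 a2 j ^2 - two_entries j l a1 a2 j - u * (two_entries j l b1 b2 j^2 - two_entries j l b1 b2 j)"
    using s assms unfolding orth_sys_def by blast
  moreover have "p dvd two_entries j l a1 a2 l ^2 - two_entries j l a1 a2 l - u * (two_entries j l b1 b2 l^2 - two_entries j l b1 b2 l)"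
    using s assms unfolding orth_sys_def by blast
  ultimately show "p dvd a1^2 - a1 - u*(b1^2 - b1) \<and> p dvd a2^2 - a2 - u*(b2^2 - b2) \<and> p dvd a1*a2 - u*b1*b2"
    using assms by (simp add: two_entries_def)
next
  assume h: "p dvd a1^2 - a1 - u*(b1^2 - b1) \<and> p dvd a2^2 - a2 - u*(b2^2 - b2) \<and> p dvd a1*a2 - u*b1*b2"
  have h': "p dvd a2*a1 - u*b2*b1" using h by (simp add: ac_simps)
  show "orth_sys Q (two_entries j l a1 a2) u (two_entries j l b1 b2)"
    unfolding orth_sys_def
  proof (intro conjI ballI impI)
    fix i i' assume "i \<in> Q" "i' \<in> Q" "i \<noteq> i'"
    thus "p dvd two_entries j l a1 a2 i * two_entries j l a1 a2 i' - u * two_entries j l b1 b2 i * two_entries j l b1 b2 i'"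
      using h h' assms(3) by (auto simp: two_entries_def)
  next
    fix i assume "i \<in> Q"
    show "p dvd two_entries j l a1 a2 i ^2 - two_entries j l a1 a2 i - u * (two_entries j l b1 b2 i^2 - two_entries j l b1 b2 i)"
      using h by (auto simp: two_entries_def)
  qed
qed

definition generic_sols_at :: "nat set \<Rightarrow> nat \<Rightarrow> ((nat \<Rightarrow> int) \<times> int \<times> (nat \<Rightarrow> int)) set" where
  "generic_sols_at Q j = {(x,u,y). (x,u,y) \<in> generic_sols Q \<and> joint_supp x y = {j}}"

definition generic_sols_at2 :: "nat set \<Rightarrow> nat \<Rightarrow> nat \<Rightarrow> ((nat \<Rightarrow> int) \<times> int \<times> (nat \<Rightarrow> int)) set" where
  "generic_sols_at2 Q j l = {(x,u,y). (x,u,y) \<in> generic_sols Q \<and> joint_supp x y = {j,l}}"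

lemma generic_sols_iff: "(x,u,y) \<in> generic_sols Q \<longleftrightarrow> x \<in> Pi0 Q {0..<p} \<and> u \<in> {0..<p} \<and> y \<in> Pi0 Q {0..<p} \<and>
    orth_sys Q x u y \<and> u \<noteq> 0 \<and> \<not> (u = 1 \<and> x = y)"
  by (auto simp: generic_sols_def orth_sols_def)

lemma generic_sols_at_to_sing_sols:
  assumes j: "j \<in> Q" and t: "(x, u, y) \<in> generic_sols_at Q j" shows "(u, x j, y j) \<in> sing_sols"
proof -
  have h: "x \<in> Pi0 Q {0..<p}" "u \<in> {0..<p}" "y \<in> Pi0 Q {0..<p}" "orth_sys Q x u y" "u \<noteq> 0"
    "\<not> (u = 1 \<and> x = y)" "joint_supp x y = {j}" using t by (auto simp: generic_sols_at_def generic_sols_iff)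
  have z: "\<And>i. i \<noteq> j \<Longrightarrow> x i = 0 \<and> y i = 0" using h(7) by (auto simp: joint_supp_def)
  have "(x j, y j) \<noteq> (0, 0)" using h(7) by (auto simp: joint_supp_def)
  moreover have "\<not> (u = 1 \<and> x j = y j)" using h(6) z by (metis ext)
  moreover have "p dvd x j ^2 - x j - u * (y j^2 - y j)" using h(4) j by (auto simp: orth_sys_def)
  ultimately show ?thesis using h j by (auto simp: sing_sols_def Pi0_def)
qed

lemma sing_sols_to_generic_sols_at:
  assumes j: "j \<in> Q" and s: "(u, a, b) \<in> sing_sols"
  shows "(single_entry j a, u, single_entry j b) \<in> generic_sols_at Q j"
proof -
  have h: "u \<in> {1..<p}" "a \<in> {0..<p}" "b \<in> {0..<p}" "(a, b) \<noteq> (0, 0)"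
    "p dvd a^2 - a - u * (b^2 - b)" "\<not> (u = 1 \<and> a = b)" using s by (auto simp: sing_sols_def)
  have "single_entry j a \<in> Pi0 Q {0..<p}" "single_entry j b \<in> Pi0 Q {0..<p}"
    using h j p_ge_2 by (auto simp: Pi0_def single_entry_def)
  moreover have "orth_sys Q (single_entry j a) u (single_entry j b)" using orth_sys_single_entry j h by blast
  moreover have "single_entry j a \<noteq> single_entry j b \<or> u \<noteq> 1"
    using h(6) by (metis single_entry_def)
  moreover have "joint_supp (single_entry j a) (single_entry j b) = {j}"
    using h(4) by (auto simp: joint_supp_def single_entry_def)
  ultimately show ?thesis using h by (auto simp: generic_sols_at_def generic_sols_iff)
qed

lemma card_generic_sols_at: assumes "j \<in> Q" shows "card (generic_sols_at Q j) = card sing_sols"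
proof -
  have "bij_betw (\<lambda>(x, u, y). (u, x j, y j)) (generic_sols_at Q j) sing_sols"
  proof (rule bij_betw_byWitness[where f' = "\<lambda>(u, a, b). (single_entry j a, u, single_entry j b)"])
    have "single_entry j (x j) = x" "single_entry j (y j) = y" if "(x, u, y) \<in> generic_sols_at Q j" for x u y
      using that by (auto simp: generic_sols_at_def joint_supp_def single_entry_def fun_eq_iff)
    thus "\<forall>t\<in>generic_sols_at Q j. (\<lambda>(u, a, b). (single_entry j a, u, single_entry j b)) ((\<lambda>(x, u, y). (u, x j, y j)) t) = t"
      by auto
  qed (auto simp: generic_sols_at_to_sing_sols[OF assms] sing_sols_to_generic_sols_at[OF assms])
  thus ?thesis by (rule bij_betw_same_card)
qed

lemma generic_sols_at2_to_pair_sols: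
  assumes jl: "j \<in> Q" "l \<in> Q" "j \<noteq> l" and t: "(x, u, y) \<in> generic_sols_at2 Q j l"
  shows "(u, x j, y j, x l, y l) \<in> pair_sols"
proof -
  have h: "x \<in> Pi0 Q {0..<p}" "u \<in> {0..<p}" "y \<in> Pi0 Q {0..<p}" "orth_sys Q x u y" "u \<noteq> 0"
    "\<not> (u = 1 \<and> x = y)" "joint_supp x y = {j, l}" using t by (auto simp: generic_sols_at2_def generic_sols_iff)
  have z: "\<And>i. i \<noteq> j \<Longrightarrow> i \<noteq> l \<Longrightarrow> x i = 0 \<and> y i = 0" using h(7) by (auto simp: joint_supp_def)
  have "(x j, y j) \<noteq> (0, 0)" "(x l, y l) \<noteq> (0, 0)" using h(7) by (auto simp: joint_supp_def)
  moreover have "\<not> (u = 1 \<and> x j = y j \<and> x l = y l)" using h(6) z by (metis ext)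
  moreover have "p dvd x j ^2 - x j - u * (y j^2 - y j)" "p dvd x l ^2 - x l - u * (y l^2 - y l)"
    "p dvd x j * x l - u * y j * y l"
    using h(4) jl by (auto simp: orth_sys_def)
  ultimately show ?thesis using h jl by (auto simp: pair_sols_def Pi0_def)
qed

lemma pair_sols_to_generic_sols_at2:
  assumes jl: "j \<in> Q" "l \<in> Q" "j \<noteq> l" and s: "(u, a1, b1, a2, b2) \<in> pair_sols"
  shows "(two_entries j l a1 a2, u, two_entries j l b1 b2) \<in> generic_sols_at2 Q j l"
proof -
  have h: "u \<in> {1..<p}" "a1 \<in> {0..<p}" "b1 \<in> {0..<p}" "a2 \<in> {0..<p}" "b2 \<in> {0..<p}"
    "(a1, b1) \<noteq> (0, 0)" "(a2, b2) \<noteq> (0, 0)"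
    "p dvd a1^2 - a1 - u * (b1^2 - b1)" "p dvd a2^2 - a2 - u * (b2^2 - b2)"
    "p dvd a1 * a2 - u * b1 * b2" "\<not> (u = 1 \<and> a1 = b1 \<and> a2 = b2)" using s by (auto simp: pair_sols_def)
  have "two_entries j l a1 a2 \<in> Pi0 Q {0..<p}" "two_entries j l b1 b2 \<in> Pi0 Q {0..<p}"
    using h jl p_ge_2 by (auto simp: Pi0_def two_entries_def)
  moreover have "orth_sys Q (two_entries j l a1 a2) u (two_entries j l b1 b2)"
    using orth_sys_two_entries[OF jl] h by blast
  moreover have "two_entries j l a1 a2 \<noteq> two_entries j l b1 b2 \<or> u \<noteq> 1"
    using h(11) jl(3) by (metis two_entries_def)
  moreover have "joint_supp (two_entries j l a1 a2) (two_entries j l b1 b2) = {j, l}"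
    using h(6,7) jl by (auto simp: joint_supp_def two_entries_def)
  ultimately show ?thesis using h by (auto simp: generic_sols_at2_def generic_sols_iff)
qed

lemma card_generic_sols_at2:
  assumes "j \<in> Q" "l \<in> Q" "j < l" shows "card (generic_sols_at2 Q j l) = card pair_sols"
proof -
  have jl: "j \<in> Q" "l \<in> Q" "j \<noteq> l" using assms by auto
  have "bij_betw (\<lambda>(x, u, y). (u, x j, y j, x l, y l)) (generic_sols_at2 Q j l) pair_sols"
  proof (rule bij_betw_byWitness[where f' = "\<lambda>(u, a1, b1, a2, b2). (two_entries j l a1 a2, u, two_entries j l b1 b2)"])
    have "two_entries j l (x j) (x l) = x" "two_entries j l (y j) (y l) = y"
      if "(x, u, y) \<in> generic_sols_at2 Q j l" for x u y
      using that by (auto simp: generic_sols_at2_def joint_supp_def two_entries_def fun_eq_iff)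
    thus "\<forall>t\<in>generic_sols_at2 Q j l. (\<lambda>(u, a1, b1, a2, b2). (two_entries j l a1 a2, u, two_entries j l b1 b2))
        ((\<lambda>(x, u, y). (u, x j, y j, x l, y l)) t) = t"
      by auto
  qed (use jl in \<open>auto simp: generic_sols_at2_to_pair_sols[OF jl] pair_sols_to_generic_sols_at2[OF jl]\<close>)
  thus ?thesis by (rule bij_betw_same_card)
qed

lemma finite_orth_sols: assumes "finite Q" shows "finite (orth_sols Q)"
proof -
  have "orth_sols Q \<subseteq> Pi0 Q {0..<p} \<times> {0..<p} \<times> Pi0 Q {0..<p}" by (auto simp: orth_sols_def)
  moreover have "finite (Pi0 Q {0..<p} \<times> {0..<p} \<times> Pi0 Q {0..<p})" using assms finite_Pi0 by auto
  ultimately show ?thesis by (rule finite_subset)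
qed


lemma orth_sols_u_zero_eq: "{t \<in> orth_sols Q. fst (snd t) = 0} = (\<lambda>(x,y). (x,0,y)) ` (orth_idems Q \<times> Pi0 Q {0..<p})"
proof (rule set_eqI)
  fix t :: "(nat \<Rightarrow> int) \<times> int \<times> (nat \<Rightarrow> int)"
  obtain x u y where t: "t = (x,u,y)" by (cases t) auto
  show "t \<in> {t \<in> orth_sols Q. fst (snd t) = 0} \<longleftrightarrow> t \<in> (\<lambda>(x,y). (x,0,y)) ` (orth_idems Q \<times> Pi0 Q {0..<p})"
    using p_ge_2 by (auto simp: t orth_sols_def orth_idems_def orth_sys_def)
qed

lemma orth_sols_diagonal_eq: "{t \<in> orth_sols Q. fst (snd t) = 1 \<and> fst t = snd (snd t)} = (\<lambda>y. (y,1,y)) ` Pi0 Q {0..<p}"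
proof (rule set_eqI)
  fix t :: "(nat \<Rightarrow> int) \<times> int \<times> (nat \<Rightarrow> int)"
  obtain x u y where t: "t = (x,u,y)" by (cases t) auto
  show "t \<in> {t \<in> orth_sols Q. fst (snd t) = 1 \<and> fst t = snd (snd t)} \<longleftrightarrow> t \<in> (\<lambda>y. (y,1,y)) ` Pi0 Q {0..<p}"
    using p_ge_2 by (auto simp: t orth_sols_def orth_sys_def)
qed

lemma generic_sols_supp_empty: "{t \<in> generic_sols Q. joint_supp (fst t) (snd (snd t)) = {}} = (\<lambda>u. (\<lambda>_. 0, u, \<lambda>_. 0)) ` {2..<p}"
proof (rule set_eqI)
  fix t :: "(nat \<Rightarrow> int) \<times> int \<times> (nat \<Rightarrow> int)"
  obtain x u y where t: "t = (x,u,y)" by (cases t) auto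
  show "t \<in> {t \<in> generic_sols Q. joint_supp (fst t) (snd (snd t)) = {}} \<longleftrightarrow> t \<in> (\<lambda>u. (\<lambda>_. 0, u, \<lambda>_. 0)) ` {2..<p}"
  proof
    assume "t \<in> {t \<in> generic_sols Q. joint_supp (fst t) (snd (snd t)) = {}}"
    hence a: "(x,u,y) \<in> generic_sols Q" "joint_supp x y = {}" using t by auto
    hence "x = (\<lambda>_. 0)" "y = (\<lambda>_. 0)" by (auto simp: joint_supp_def fun_eq_iff)
    moreover have "u \<in> {2..<p}" using a(1) \<open>x = (\<lambda>_. 0)\<close> \<open>y = (\<lambda>_. 0)\<close> by (auto simp: generic_sols_iff)
    ultimately show "t \<in> (\<lambda>u. (\<lambda>_. 0, u, \<lambda>_. 0)) ` {2..<p}" using t by auto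
  next
    assume "t \<in> (\<lambda>u. (\<lambda>_. 0, u, \<lambda>_. 0)) ` {2..<p}"
    then obtain v where v: "t = (\<lambda>_. 0, v, \<lambda>_. 0)" "v \<in> {2..<p}" by auto
    thus "t \<in> {t \<in> generic_sols Q. joint_supp (fst t) (snd (snd t)) = {}}"
      by (auto simp: generic_sols_iff Pi0_def orth_sys_def joint_supp_def)
  qed
qed

lemma generic_sols_decomp: assumes "finite Q"
  shows "generic_sols Q = {t \<in> generic_sols Q. joint_supp (fst t) (snd (snd t)) = {}} \<union>
    (\<Union>j\<in>Q. generic_sols_at Q j) \<union> (\<Union>(j,l)\<in>ord_pairs Q. generic_sols_at2 Q j l)"
proof (rule set_eqI, rule iffI)
  fix t assume tD: "t \<in> generic_sols Q"
  obtain x u y where t: "t = (x,u,y)" by (cases t) auto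
  have xD: "(x,u,y) \<in> generic_sols Q" using tD t by simp
  have sQ: "joint_supp x y \<subseteq> Q" using xD by (auto simp: generic_sols_iff Pi0_def joint_supp_def)
  have "joint_supp x y = {} \<or> (\<exists>j. joint_supp x y = {j}) \<or> (\<exists>j l. j < l \<and> joint_supp x y = {j,l})"
    apply (rule no_three_distinct_cases) using joint_supp_no_three[OF xD] by blast
  thus "t \<in> {t \<in> generic_sols Q. joint_supp (fst t) (snd (snd t)) = {}} \<union>
      (\<Union>j\<in>Q. generic_sols_at Q j) \<union> (\<Union>(j,l)\<in>ord_pairs Q. generic_sols_at2 Q j l)"
  proof (elim disjE exE conjE)
    assume "joint_supp x y = {}" thus ?thesis using xD t by auto
  next
    fix j assume j: "joint_supp x y = {j}"
    hence "j \<in> Q" using sQ by auto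
    moreover have "t \<in> generic_sols_at Q j" using j xD t by (auto simp: generic_sols_at_def)
    ultimately show ?thesis by blast
  next
    fix j l assume jl: "j < l" "joint_supp x y = {j,l}"
    hence "(j,l) \<in> ord_pairs Q" using sQ by (auto simp: ord_pairs_def)
    moreover have "t \<in> generic_sols_at2 Q j l" using jl xD t by (auto simp: generic_sols_at2_def)
    ultimately show ?thesis by blast
  qed
next
  fix t assume "t \<in> {t \<in> generic_sols Q. joint_supp (fst t) (snd (snd t)) = {}} \<union>
    (\<Union>j\<in>Q. generic_sols_at Q j) \<union> (\<Union>(j,l)\<in>ord_pairs Q. generic_sols_at2 Q j l)"
  thus "t \<in> generic_sols Q" by (auto simp: generic_sols_at_def generic_sols_at2_def)
qed

lemma generic_sols_at_subset: "generic_sols_at Q j \<subseteq> generic_sols Q" by (auto simp: generic_sols_at_def)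
lemma generic_sols_at2_subset: "generic_sols_at2 Q j l \<subseteq> generic_sols Q" by (auto simp: generic_sols_at2_def)

lemma card_generic_sols: assumes "finite Q"
  shows "int (card (generic_sols Q)) = (p - 2) + int (card Q) * (p^2 - 2*p + 2) + int (card (ord_pairs Q)) * (p^2 - 3*p + 4)"
proof -
  have fD: "finite (generic_sols Q)" using finite_orth_sols[OF assms] by (rule finite_subset[rotated]) (auto simp: generic_sols_def)
  have fP: "finite (ord_pairs Q)" using finite_ord_pairs[OF assms] .
  let ?Z = "{t \<in> generic_sols Q. joint_supp (fst t) (snd (snd t)) = {}}"
  let ?A = "\<Union>j\<in>Q. generic_sols_at Q j" and ?B = "\<Union>(j,l)\<in>ord_pairs Q. generic_sols_at2 Q j l"
  have fA: "finite ?A" by (rule finite_subset[OF _ fD]) (use generic_sols_at_subset in blast)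
  have fB: "finite ?B" by (rule finite_subset[OF _ fD]) (use generic_sols_at2_subset in blast)
  have fZ: "finite ?Z" using fD by simp
  have d1: "?Z \<inter> ?A = {}" by (auto simp: generic_sols_at_def)
  have d2: "(?Z \<union> ?A) \<inter> ?B = {}" by (auto simp: generic_sols_at_def generic_sols_at2_def doubleton_eq_iff ord_pairs_def)
  have "card (generic_sols Q) = card ?Z + card ?A + card ?B"
    apply (subst generic_sols_decomp[OF assms])
    apply (subst card_Un_disjoint[OF _ fB d2])
     apply (use fZ fA in simp)
    apply (subst card_Un_disjoint[OF fZ fA d1])
    by simp
  also have "card ?Z = nat (p - 2)" unfolding generic_sols_supp_empty by (subst card_image) (auto simp: inj_on_def)
  also have "card ?A = (\<Sum>j\<in>Q. card (generic_sols_at Q j))"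
  proof (rule card_UN_disjoint[OF assms])
    show "\<forall>i\<in>Q. finite (generic_sols_at Q i)" using fD generic_sols_at_subset finite_subset by blast
    show "\<forall>i\<in>Q. \<forall>j\<in>Q. i \<noteq> j \<longrightarrow> generic_sols_at Q i \<inter> generic_sols_at Q j = {}" by (auto simp: generic_sols_at_def)
  qed
  also have "\<dots> = card Q * card sing_sols" using card_generic_sols_at by simp
  also have "card ?B = (\<Sum>(j,l)\<in>ord_pairs Q. card (generic_sols_at2 Q j l))"
  proof -
    have "card ?B = (\<Sum>pr\<in>ord_pairs Q. card ((\<lambda>(j,l). generic_sols_at2 Q j l) pr))"
    proof (rule card_UN_disjoint[OF fP])
      show "\<forall>i\<in>ord_pairs Q. finite ((\<lambda>(j, l). generic_sols_at2 Q j l) i)"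
        by (auto intro: finite_subset[OF generic_sols_at2_subset fD])
      show "\<forall>i\<in>ord_pairs Q. \<forall>j\<in>ord_pairs Q. i \<noteq> j \<longrightarrow>
          (\<lambda>(j, l). generic_sols_at2 Q j l) i \<inter> (\<lambda>(j, l). generic_sols_at2 Q j l) j = {}"
        by (auto simp: ord_pairs_def generic_sols_at2_def doubleton_eq_iff)
    qed
    thus ?thesis by (simp add: case_prod_unfold)
  qed
  also have "\<dots> = card (ord_pairs Q) * card pair_sols"
  proof -
    have "(\<Sum>(j,l)\<in>ord_pairs Q. card (generic_sols_at2 Q j l)) = (\<Sum>(j,l)\<in>ord_pairs Q. card pair_sols)"
      by (rule sum.cong) (auto simp: ord_pairs_def card_generic_sols_at2)
    thus ?thesis by simp
  qed
  finally have "card (generic_sols Q) = nat (p - 2) + card Q * card sing_sols + card (ord_pairs Q) * card pair_sols" .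
  hence "int (card (generic_sols Q)) = int (nat (p - 2)) + int (card Q) * int (card sing_sols) + int (card (ord_pairs Q)) * int (card pair_sols)"
    by simp
  moreover have "int (nat (p - 2)) = p - 2" using p_ge_2 by simp
  ultimately show ?thesis unfolding card_sing_sols card_pair_sols by simp
qed

lemma card_orth_sols: assumes "finite Q" shows "real (card (orth_sols Q)) = orth_sols_count (of_int p) (card Q)"
proof -
  let ?D0 = "{t \<in> orth_sols Q. fst (snd t) = 0}" and ?D1 = "{t \<in> orth_sols Q. fst (snd t) = 1 \<and> fst t = snd (snd t)}"
  have f: "finite ?D0" "finite ?D1" "finite (generic_sols Q)"
    using finite_orth_sols[OF assms] by (auto intro: finite_subset simp: generic_sols_def)
  have "card (?D0 \<union> ?D1 \<union> generic_sols Q) = card (?D0 \<union> ?D1) + card (generic_sols Q)"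
    by (rule card_Un_disjoint) (use f in \<open>auto simp: generic_sols_def\<close>)
  moreover have "card (?D0 \<union> ?D1) = card ?D0 + card ?D1"
    by (rule card_Un_disjoint) (use f in auto)
  moreover have "orth_sols Q = ?D0 \<union> ?D1 \<union> generic_sols Q" by (auto simp: generic_sols_def)
  ultimately have "card (orth_sols Q) = card ?D0 + card ?D1 + card (generic_sols Q)" by simp
  moreover have "card ?D0 = card (orth_idems Q) * card (Pi0 Q {0..<p})"
    unfolding orth_sols_u_zero_eq by (subst card_image) (auto simp: inj_on_def card_cartesian_product)
  moreover have "card ?D1 = card (Pi0 Q {0..<p})"
    unfolding orth_sols_diagonal_eq by (rule card_image) (auto simp: inj_on_def)
  ultimately have "int (card (orth_sols Q)) = (int (card Q) + 2) * p ^ card Q + int (card (generic_sols Q))"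
    using card_orth_idems[OF assms] card_Pi0_residues[OF assms] by (simp add: algebra_simps)
  hence int_eq: "int (card (orth_sols Q)) = (int (card Q) + 2) * p ^ card Q + (p - 2)
      + int (card Q) * (p^2 - 2 * p + 2) + int (card (ord_pairs Q)) * (p^2 - 3 * p + 4)"
    using card_generic_sols[OF assms] by simp
  have real_eq: "real (card (orth_sols Q)) = (real (card Q) + 2) * of_int p ^ card Q + (of_int p - 2)
      + real (card Q) * (of_int p^2 - 2 * of_int p + 2) + real (card (ord_pairs Q)) * (of_int p^2 - 3 * of_int p + 4)"
    using arg_cong[where f = "of_int :: int \<Rightarrow> real", OF int_eq] by simp
  have "real (2 * card (ord_pairs Q)) = real (card Q * card Q - card Q)"
    using card_ord_pairs[OF assms] by (rule arg_cong)
  hence pairs_eq: "real (card (ord_pairs Q)) = real (card Q) * (real (card Q) - 1) / 2"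
    using le_square[of "card Q"] by (simp add: of_nat_diff algebra_simps)
  show ?thesis by (simp only: real_eq pairs_eq orth_sols_count_def)
qed

definition x_zero_sols :: "nat set \<Rightarrow> (int \<times> (nat \<Rightarrow> int)) set" where
  "x_zero_sols Q = {(u,y). u \<in> {0..<p} \<and> y \<in> Pi0 Q {0..<p} \<and> orth_sys Q (\<lambda>_. 0) u y}"

lemma orth_sys_x_zero_iff:
  assumes "\<not> p dvd u"
  shows "orth_sys Q (\<lambda>_. 0) u y \<longleftrightarrow>
    (\<forall>i\<in>Q. \<forall>j\<in>Q. i \<noteq> j \<longrightarrow> p dvd y i * y j) \<and> (\<forall>i\<in>Q. p dvd y i ^ 2 - y i)"
  using assms by (simp add: orth_sys_def p_dvd_mult_iff mult.assoc)

lemma x_zero_sols_eq: "x_zero_sols Q = (\<lambda>y. (0, y)) ` Pi0 Q {0..<p} \<union> {1..<p} \<times> orth_idems Q"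
proof (rule set_eqI, clarify)
  fix u y
  have "orth_sys Q (\<lambda>_. 0) 0 y" by (simp add: orth_sys_def)
  moreover have "orth_sys Q (\<lambda>_. 0) u y \<longleftrightarrow>
      (\<forall>i\<in>Q. \<forall>j\<in>Q. i \<noteq> j \<longrightarrow> p dvd y i * y j) \<and> (\<forall>i\<in>Q. p dvd y i ^ 2 - y i)" if "u \<in> {1..<p}"
    using that residue_dvd_iff by (intro orth_sys_x_zero_iff) auto
  ultimately show "(u, y) \<in> x_zero_sols Q \<longleftrightarrow> (u, y) \<in> (\<lambda>y. (0, y)) ` Pi0 Q {0..<p} \<union> {1..<p} \<times> orth_idems Q"
    using p_ge_2 by (cases "u = 0") (auto simp: x_zero_sols_def orth_idems_def)
qed

lemma card_x_zero_sols: assumes "finite Q" shows "real (card (x_zero_sols Q)) = x_zero_sols_count (of_int p) (card Q)"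
proof -
  have "card (x_zero_sols Q) = card ((\<lambda>y. (0::int,y)) ` Pi0 Q {0..<p}) + card ({1..<p} \<times> orth_idems Q)"
    unfolding x_zero_sols_eq
    by (rule card_Un_disjoint) (use finite_Pi0[OF assms] assms in \<open>auto simp: orth_idems_def\<close>)
  also have "card ((\<lambda>y. (0::int,y)) ` Pi0 Q {0..<p}) = card (Pi0 Q {0..<p})" by (rule card_image) (auto simp: inj_on_def)
  finally have "int (card (x_zero_sols Q)) = int (card (Pi0 Q {0..<p})) + int (card {1..<p}) * int (card (orth_idems Q))"
    by (simp add: card_cartesian_product)
  hence "int (card (x_zero_sols Q)) = p ^ card Q + (p - 1) * (int (card Q) + 1)"
    using card_Pi0_residues[OF assms] card_orth_idems[OF assms] p_ge_2 by simp
  hence "of_int (int (card (x_zero_sols Q))) = (of_int (p ^ card Q + (p - 1) * (int (card Q) + 1)) :: real)"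
    by (rule arg_cong)
  thus ?thesis by (simp add: x_zero_sols_count_def)
qed

text \<open>On \<open>P\<close> the \<open>y\<close>-coordinates vanish, so there the conditions only ask for idempotents
  orthogonal to all other \<open>x\<^sub>j\<close>.\<close>

definition orth_idem_on :: "nat set \<Rightarrow> nat set \<Rightarrow> (nat \<Rightarrow> int) \<Rightarrow> bool" where
  "orth_idem_on P Q x \<longleftrightarrow> (\<forall>i\<in>P. p dvd x i ^ 2 - x i) \<and> (\<forall>i\<in>P. \<forall>j\<in>P \<union> Q. i \<noteq> j \<longrightarrow> p dvd x i * x j)"

definition ext_orth_sols :: "nat set \<Rightarrow> nat set \<Rightarrow> ((nat \<Rightarrow> int) \<times> int \<times> (nat \<Rightarrow> int)) set" where
  "ext_orth_sols P Q = {(x,u,y). x \<in> Pi0 (P \<union> Q) {0..<p} \<and> u \<in> {0..<p} \<and> y \<in> Pi0 Q {0..<p} \<and> orth_idem_on P Q x \<and> orth_sys Q x u y}"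

lemma orth_sys_union_iff:
  assumes "P \<inter> Q = {}" "\<forall>i\<in>P. y i = 0"
  shows "orth_sys (P \<union> Q) x u y \<longleftrightarrow> orth_idem_on P Q x \<and> orth_sys Q x u y"
proof -
  have pair: "p dvd x i * x j - u * y i * y j \<longleftrightarrow> p dvd x i * x j" if "i \<in> P \<or> j \<in> P" for i j
    using that assms(2) by auto
  have single: "p dvd x i ^ 2 - x i - u * (y i ^ 2 - y i) \<longleftrightarrow> p dvd x i ^ 2 - x i" if "i \<in> P" for i
    using that assms(2) by auto
  show ?thesis
  proof
    assume h: "orth_sys (P \<union> Q) x u y"
    have "orth_idem_on P Q x" unfolding orth_idem_on_def
    proof (intro conjI ballI impI)
      fix i assume "i \<in> P" thus "p dvd x i ^ 2 - x i" using h single by (auto simp: orth_sys_def)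
    next
      fix i j assume "i \<in> P" "j \<in> P \<union> Q" "i \<noteq> j"
      thus "p dvd x i * x j" using h pair[of i j] by (auto simp: orth_sys_def)
    qed
    moreover have "orth_sys Q x u y" using h by (auto simp: orth_sys_def)
    ultimately show "orth_idem_on P Q x \<and> orth_sys Q x u y" ..
  next
    assume h: "orth_idem_on P Q x \<and> orth_sys Q x u y"
    show "orth_sys (P \<union> Q) x u y" unfolding orth_sys_def
    proof (intro conjI ballI impI)
      fix i j assume ij: "i \<in> P \<union> Q" "j \<in> P \<union> Q" "i \<noteq> j"
      show "p dvd x i * x j - u * y i * y j"
      proof (cases "i \<in> P \<or> j \<in> P")
        case True
        thus ?thesis using h ij pair[OF True] by (auto simp: orth_idem_on_def mult.commute)
      next
        case False
        thus ?thesis using h ij by (auto simp: orth_sys_def)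
      qed
    next
      fix i assume "i \<in> P \<union> Q"
      thus "p dvd x i ^ 2 - x i - u * (y i ^ 2 - y i)" using h single by (auto simp: orth_idem_on_def orth_sys_def)
    qed
  qed
qed

lemma orth_sys_cong: "(\<And>i. i \<in> Q \<Longrightarrow> x i = x' i) \<Longrightarrow> orth_sys Q x u y = orth_sys Q x' u y"
  by (simp add: orth_sys_def)

lemma ext_orth_sols_P_zero: assumes "P \<inter> Q = {}" shows "{t \<in> ext_orth_sols P Q. \<forall>i\<in>P. fst t i = 0} = orth_sols Q"
proof (rule set_eqI)
  fix t :: "(nat \<Rightarrow> int) \<times> int \<times> (nat \<Rightarrow> int)"
  obtain x u y where t: "t = (x,u,y)" by (cases t) auto
  show "t \<in> {t \<in> ext_orth_sols P Q. \<forall>i\<in>P. fst t i = 0} \<longleftrightarrow> t \<in> orth_sols Q"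
  proof
    assume "t \<in> {t \<in> ext_orth_sols P Q. \<forall>i\<in>P. fst t i = 0}"
    hence h: "x \<in> Pi0 (P \<union> Q) {0..<p}" "u \<in> {0..<p}" "y \<in> Pi0 Q {0..<p}" "orth_sys Q x u y" "\<forall>i\<in>P. x i = 0"
      by (auto simp: ext_orth_sols_def t)
    have "x \<in> Pi0 Q {0..<p}" using h(1,5) by (auto simp: Pi0_def)
    thus "t \<in> orth_sols Q" using h by (auto simp: orth_sols_def t)
  next
    assume "t \<in> orth_sols Q"
    hence h: "x \<in> Pi0 Q {0..<p}" "u \<in> {0..<p}" "y \<in> Pi0 Q {0..<p}" "orth_sys Q x u y" by (auto simp: orth_sols_def t)
    have z: "\<forall>i\<in>P. x i = 0" using h(1) assms by (auto simp: Pi0_def)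
    have "x \<in> Pi0 (P \<union> Q) {0..<p}" using h(1) p_ge_2 by (auto simp: Pi0_def)
    moreover have "orth_idem_on P Q x" using z by (simp add: orth_idem_on_def)
    ultimately show "t \<in> {t \<in> ext_orth_sols P Q. \<forall>i\<in>P. fst t i = 0}" using h z by (auto simp: ext_orth_sols_def t)
  qed
qed

lemma orth_idem_on_imp_single_entry:
  assumes x: "x \<in> Pi0 (P \<union> Q) {0..<p}" "orth_idem_on P Q x" and j: "j \<in> P" "x j \<noteq> 0"
  shows "x = single_entry j 1"
proof
  have rng: "\<And>i. i \<in> P \<union> Q \<Longrightarrow> x i \<in> {0..<p}" using x(1) by (auto simp: Pi0_def)
  have "p dvd x j ^ 2 - x j" using x(2) j by (auto simp: orth_idem_on_def)
  hence xj: "x j = 1" using residue_idem_iff rng[of j] j by auto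
  fix i show "x i = single_entry j 1 i"
  proof (cases "i \<in> P \<union> Q \<and> i \<noteq> j")
    case True
    hence "p dvd x j * x i" using x(2) j by (auto simp: orth_idem_on_def)
    hence "x i = 0" using xj residue_dvd_iff rng True by auto
    thus ?thesis using True by (simp add: single_entry_def)
  qed (use x(1) xj in \<open>auto simp: Pi0_def single_entry_def\<close>)
qed

lemma ext_orth_sols_P_nonzero: assumes "P \<inter> Q = {}"
  shows "{t \<in> ext_orth_sols P Q. \<not> (\<forall>i\<in>P. fst t i = 0)} =
    (\<Union>j\<in>P. (\<lambda>(u, y). (single_entry j 1, u, y)) ` x_zero_sols Q)"
proof -
  have sys: "orth_sys Q (single_entry j 1) u y = orth_sys Q (\<lambda>_. 0) u y" if "j \<in> P" for j u y
    using that assms by (intro orth_sys_cong) (auto simp: single_entry_def)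
  have "(x, u, y) \<in> ext_orth_sols P Q \<and> \<not> (\<forall>i\<in>P. x i = 0) \<longleftrightarrow>
      (\<exists>j\<in>P. x = single_entry j 1 \<and> (u, y) \<in> x_zero_sols Q)" for x u y
  proof
    assume h: "(x, u, y) \<in> ext_orth_sols P Q \<and> \<not> (\<forall>i\<in>P. x i = 0)"
    then obtain j where j: "j \<in> P" "x j \<noteq> 0" by blast
    hence "x = single_entry j 1" using h orth_idem_on_imp_single_entry by (auto simp: ext_orth_sols_def)
    thus "\<exists>j\<in>P. x = single_entry j 1 \<and> (u, y) \<in> x_zero_sols Q"
      using h j sys[OF j(1)] by (auto simp: ext_orth_sols_def x_zero_sols_def)
  next
    assume "\<exists>j\<in>P. x = single_entry j 1 \<and> (u, y) \<in> x_zero_sols Q"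
    then obtain j where j: "j \<in> P" "x = single_entry j 1" "(u, y) \<in> x_zero_sols Q" by blast
    thus "(x, u, y) \<in> ext_orth_sols P Q \<and> \<not> (\<forall>i\<in>P. x i = 0)"
      using sys[OF j(1)] p_ge_2
      by (auto simp: ext_orth_sols_def x_zero_sols_def orth_idem_on_def Pi0_def single_entry_def)
  qed
  note eq = this
  show ?thesis
  proof (rule set_eqI)
    fix t :: "(nat \<Rightarrow> int) \<times> int \<times> (nat \<Rightarrow> int)"
    obtain x u y where t: "t = (x, u, y)" by (cases t) auto
    show "t \<in> {t \<in> ext_orth_sols P Q. \<not> (\<forall>i\<in>P. fst t i = 0)} \<longleftrightarrow>
        t \<in> (\<Union>j\<in>P. (\<lambda>(u, y). (single_entry j 1, u, y)) ` x_zero_sols Q)"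
      using eq[of x u y] by (auto simp: t image_iff)
  qed
qed

lemma card_ext_orth_sols: assumes "finite P" "finite Q" "P \<inter> Q = {}"
  shows "card (ext_orth_sols P Q) = card (orth_sols Q) + card P * card (x_zero_sols Q)"
proof -
  let ?zero = "{t \<in> ext_orth_sols P Q. \<forall>i\<in>P. fst t i = 0}"
  let ?nonzero = "{t \<in> ext_orth_sols P Q. \<not> (\<forall>i\<in>P. fst t i = 0)}"
  let ?at = "\<lambda>j. (\<lambda>(u, y). (single_entry j 1, u, y)) ` x_zero_sols Q"
  have "ext_orth_sols P Q \<subseteq> Pi0 (P \<union> Q) {0..<p} \<times> {0..<p} \<times> Pi0 Q {0..<p}"
    by (auto simp: ext_orth_sols_def)
  hence fin: "finite ?zero" "finite ?nonzero"
    using assms by (auto intro: finite_subset simp: finite_Pi0)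
  have fin_x0: "finite (x_zero_sols Q)"
    by (rule finite_subset[of _ "{0..<p} \<times> Pi0 Q {0..<p}"]) (auto simp: x_zero_sols_def finite_Pi0 assms)
  have "card (ext_orth_sols P Q) = card ?zero + card ?nonzero"
    using fin by (subst card_Un_disjoint[symmetric]) (auto intro: arg_cong[where f = card])
  also have "card ?zero = card (orth_sols Q)" using ext_orth_sols_P_zero[OF assms(3)] by simp
  also have "card ?nonzero = (\<Sum>j\<in>P. card (?at j))"
    unfolding ext_orth_sols_P_nonzero[OF assms(3)]
    using fin_x0 by (intro card_UN_disjoint[OF assms(1)]) (auto simp: single_entry_inject)
  also have "\<dots> = card P * card (x_zero_sols Q)"
    by (simp add: card_image inj_on_def)
  finally show ?thesis .
qed

end

section \<open>Subring matrices with diagonal \<open>(p\<^sup>3, p, \<dots>, p, p\<^sup>2, p, \<dots>, p, 1)\<close>\<close>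

definition S32_comp :: "nat \<Rightarrow> nat \<Rightarrow> nat list" where
  "S32_comp n k = map (\<lambda>i. if i = 0 then 3 else if i = k then 2 else 1) [0..<n - 1]"

locale S32_matrix = prime_modulus "int pn" for pn :: nat +
  fixes n k :: nat
  assumes n3: "3 \<le> n" and k1: "1 \<le> k" and kn: "k \<le> n - 2"
begin

abbreviation "m \<equiv> n - 1"
abbreviation p :: int where "p \<equiv> int pn"

definition diag :: "nat \<Rightarrow> int" where
  "diag r = (if r = 0 then p^3 else if r = k then p^2 else p)"

text \<open>Indices are 0-based: row \<open>k\<close> carries the diagonal \<open>p\<^sup>2\<close>, and \<open>m = n - 1\<close> is the
  last row and column.\<close>

definition M :: "(nat \<Rightarrow> int) \<Rightarrow> (nat \<Rightarrow> int) \<Rightarrow> nat \<Rightarrow> nat \<Rightarrow> int" where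
  "M a b r s = (if n \<le> r \<or> n \<le> s then 0 else
     (if s = m then 1 else 0) + (if s = r \<and> r < m then diag r else 0) + (if r = 0 then p * a s else 0)
     + (if r = k then p * b s else 0))"

definition R :: "nat set" where "R = {1..<m} - {k}"
definition Q :: "nat set" where "Q = {k<..<m}"
definition P :: "nat set" where "P = {1..<k}"

definition params :: "((nat \<Rightarrow> int) \<times> (nat \<Rightarrow> int)) set" where
  "params = {(a,b). a \<in> Pi0 {1..<m} {0..<p^2} \<and> b \<in> Pi0 Q {0..<p}}"

lemma k_facts: "0 < k" "k < m" "k \<noteq> m" "0 < m" "m < n" "Suc m = n" "k \<noteq> 0" "0 \<noteq> k" using n3 k1 kn by auto

lemma Q_subset_R: "Q \<subseteq> R" using k_facts by (auto simp: Q_def R_def)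
lemma k_notin_R: "k \<notin> R" by (simp add: R_def)
lemma R_bounds: "i \<in> R \<Longrightarrow> 0 < i \<and> i < m \<and> i \<noteq> k" by (auto simp: R_def)

lemma params_zero:
  assumes "(a,b) \<in> params"
  shows "\<And>s. s \<notin> R \<Longrightarrow> s \<noteq> k \<Longrightarrow> a s = 0" "\<And>s. s \<notin> Q \<Longrightarrow> b s = 0" "a 0 = 0" "a m = 0"
    "b 0 = 0" "b k = 0" "b m = 0"
  using assms k_facts by (auto simp: params_def Pi0_def R_def Q_def)

lemma sum_if_both_eq: "(\<Sum>s<n. (if s = i \<and> s = j then X else 0)) = (if i = j \<and> i < n then X else (0::int))"
  by (cases "i = j") (auto intro: sum.neutral)

lemma col_comb_row:
  assumes "r < n"
  shows "(\<Sum>s<n. c s * M a b r s) = c m + (if r < m then diag r * c r else 0)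
     + (if r = 0 then p * (\<Sum>s<n. a s * c s) else 0) + (if r = k then p * (\<Sum>s<n. b s * c s) else 0)"
proof -
  have "(\<Sum>s<n. c s * M a b r s) = (\<Sum>s<n. (if s = m then c s else 0) + (if s = r \<and> r < m then diag r * c s else 0)
      + (if r = 0 then p * (a s * c s) else 0) + (if r = k then p * (b s * c s) else 0))"
    by (rule sum.cong) (use assms in \<open>auto simp: M_def algebra_simps\<close>)
  also have "\<dots> = (\<Sum>s<n. (if s = m then c s else 0)) + (\<Sum>s<n. (if s = r \<and> r < m then diag r * c s else 0))
      + (\<Sum>s<n. (if r = 0 then p * (a s * c s) else 0)) + (\<Sum>s<n. (if r = k then p * (b s * c s) else 0))"
    by (simp add: sum.distrib)
  also have "(\<Sum>s<n. (if s = m then c s else 0)) = c m" using k_facts by simp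
  also have "(\<Sum>s<n. (if s = r \<and> r < m then diag r * c s else 0)) = (if r < m then diag r * c r else 0)"
    using assms by (cases "r < m") auto
  also have "(\<Sum>s<n. (if r = 0 then p * (a s * c s) else 0)) = (if r = 0 then p * (\<Sum>s<n. a s * c s) else 0)"
    by (simp add: sum_distrib_left)
  also have "(\<Sum>s<n. (if r = k then p * (b s * c s) else 0)) = (if r = k then p * (\<Sum>s<n. b s * c s) else 0)"
    by (simp add: sum_distrib_left)
  finally show ?thesis .
qed

lemma M_entry:
  assumes "r < n" "i < m"
  shows "M a b r i = (if i = r then diag r else 0) + (if r = 0 then p * a i else 0) + (if r = k then p * b i else 0)"
  using assms k_facts by (auto simp: M_def)

lemma col_coeff_sum_b:
  assumes ab: "(a, b) \<in> params" and ij: "i < m" "j < m"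
    and cR: "\<And>r. r \<in> R \<Longrightarrow> c r = (if r = i \<and> r = j then p else 0)"
  shows "(\<Sum>s<n. b s * c s) = (if i = j then p * b i else 0)"
proof -
  have dz: "\<And>s. s \<notin> Q \<Longrightarrow> b s = 0" using params_zero[OF ab] by auto
  have "(\<Sum>s<n. b s * c s) = (\<Sum>s<n. (if s = i \<and> s = j then p * b i else 0))"
  proof (rule sum.cong)
    fix s assume "s \<in> {..<n}"
    show "b s * c s = (if s = i \<and> s = j then p * b i else 0)"
    proof (cases "s \<in> Q")
      case True
      hence "s \<in> R" using Q_subset_R by auto
      hence "c s = (if s = i \<and> s = j then p else 0)" by (rule cR)
      thus ?thesis by auto
    next
      case False thus ?thesis using dz[of s] by auto
    qed
  qed simp
  thus ?thesis using sum_if_both_eq ij k_facts by simp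
qed

lemma col_coeff_sum_a:
  assumes ab: "(a, b) \<in> params" and ij: "i < m" "j < m"
    and cR: "\<And>r. r \<in> R \<Longrightarrow> c r = (if r = i \<and> r = j then p else 0)"
  shows "(\<Sum>s<n. a s * c s) = a k * c k + (if i = j \<and> i \<in> R then p * a i else 0)"
proof -
  have dz: "\<And>s. s \<notin> R \<Longrightarrow> s \<noteq> k \<Longrightarrow> a s = 0" using params_zero[OF ab] by auto
  have "(\<Sum>s<n. a s * c s) = (\<Sum>s<n. (if s = k then a k * c k else 0) + (if s = i \<and> s = j then (if i \<in> R then p * a i else 0) else 0))"
  proof (rule sum.cong)
    fix s assume "s \<in> {..<n}"
    show "a s * c s = (if s = k then a k * c k else 0) + (if s = i \<and> s = j then (if i \<in> R then p * a i else 0) else 0)"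
    proof (cases "s \<in> R")
      case True
      have sk: "s \<noteq> k" using R_bounds[OF True] by simp
      have "c s = (if s = i \<and> s = j then p else 0)" using cR[OF True] .
      thus ?thesis using sk True by auto
    next
      case False
      show ?thesis
      proof (cases "s = k")
        case True thus ?thesis using k_notin_R by auto
      next
        case False
        thus ?thesis using dz[of s] \<open>s \<notin> R\<close> by auto
      qed
    qed
  qed simp
  also have "\<dots> = a k * c k + (if i = j \<and> i \<in> R then p * a i else 0)"
    using sum_if_both_eq[of i j "if i \<in> R then p * a i else 0"] ij k_facts by (simp add: sum.distrib)
  finally show ?thesis .
qed

text \<open>After the coefficients of the columns with diagonal \<open>p\<close> and of the last column are
  eliminated, only those of columns \<open>k\<close> and \<open>0\<close> remain, here \<open>ck\<close> and \<open>c0\<close>.\<close>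

definition col_prod_cond :: "(nat \<Rightarrow> int) \<Rightarrow> (nat \<Rightarrow> int) \<Rightarrow> nat \<Rightarrow> nat \<Rightarrow> bool" where
  "col_prod_cond a b i j \<longleftrightarrow> (\<exists>ck c0. M a b k i * M a b k j = p^2 * ck + (if i = j then p^2 * b i else 0) \<and>
      M a b 0 i * M a b 0 j = p^3 * c0 + (if i = j \<and> i \<in> R then p^2 * a i else 0) + p * a k * ck)"

lemma in_col_span_prod_imp_col_prod_cond:
  assumes ab: "(a,b) \<in> params" and ij: "i < m" "j < m"
    and span: "in_col_span n (M a b) (\<lambda>r. M a b r i * M a b r j)"
  shows "col_prod_cond a b i j"
proof -
  obtain c where c: "\<And>r. r < n \<Longrightarrow> M a b r i * M a b r j = (\<Sum>s<n. c s * M a b r s)"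
    using span unfolding in_col_span_def by blast
  have cm: "c m = 0"
  proof -
    have "M a b m i * M a b m j = (\<Sum>s<n. c s * M a b m s)" using c k_facts by simp
    thus ?thesis using col_comb_row[of m c a b] M_entry[of m i a b] M_entry[of m j a b] ij k_facts by simp
  qed
  have cR: "\<And>r. r \<in> R \<Longrightarrow> c r = (if r = i \<and> r = j then p else 0)"
  proof -
    fix r assume r: "r \<in> R"
    have rn: "r < n" "r < m" "r \<noteq> 0" "r \<noteq> k" using R_bounds[OF r] k_facts by auto
    have "M a b r i * M a b r j = (\<Sum>s<n. c s * M a b r s)" using c rn by simp
    moreover have "(\<Sum>s<n. c s * M a b r s) = p * c r"
      using col_comb_row[of r c a b] rn cm by (simp add: diag_def)
    moreover have "M a b r i = (if i = r then p else 0)" "M a b r j = (if j = r then p else 0)"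
      using M_entry[of r i a b] M_entry[of r j a b] rn ij by (simp_all add: diag_def)
    ultimately have "(if i = r then p else 0) * (if j = r then p else 0) = p * c r" by simp
    thus "c r = (if r = i \<and> r = j then p else 0)" using p_ge_2 by (auto split: if_splits)
  qed
  note sb = col_coeff_sum_b[OF ab ij cR] and sa = col_coeff_sum_a[OF ab ij cR]
  have rk: "M a b k i * M a b k j = p^2 * c k + p * (if i = j then p * b i else 0)"
    using c[of k] col_comb_row[of k c a b] k_facts cm sb by (simp add: diag_def)
  have r0: "M a b 0 i * M a b 0 j = p^3 * c 0 + p * (a k * c k + (if i = j \<and> i \<in> R then p * a i else 0))"
    using c[of 0] col_comb_row[of 0 c a b] k_facts cm sa by (simp add: diag_def)
  show ?thesis unfolding col_prod_cond_def
    by (rule exI[of _ "c k"], rule exI[of _ "c 0"]) (use rk r0 in \<open>auto simp: algebra_simps power2_eq_square\<close>)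
qed

lemma col_prod_cond_imp_in_col_span_prod:
  assumes ab: "(a,b) \<in> params" and ij: "i < m" "j < m"
    and cond: "col_prod_cond a b i j"
  shows "in_col_span n (M a b) (\<lambda>r. M a b r i * M a b r j)"
proof -
  obtain ck c0 where e: "M a b k i * M a b k j = p^2 * ck + (if i = j then p^2 * b i else 0)"
    "M a b 0 i * M a b 0 j = p^3 * c0 + (if i = j \<and> i \<in> R then p^2 * a i else 0) + p * a k * ck"
    using cond unfolding col_prod_cond_def by blast
  define c where "c s = (if s = 0 then c0 else if s = k then ck else if s \<in> R \<and> s = i \<and> s = j then p else 0)" for s
  have cm: "c m = 0" using k_facts by (auto simp: c_def R_def)
  have cR: "\<And>r. r \<in> R \<Longrightarrow> c r = (if r = i \<and> r = j then p else 0)"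
    using R_bounds by (auto simp: c_def)
  note sb = col_coeff_sum_b[OF ab ij cR] and sa = col_coeff_sum_a[OF ab ij cR]
  show ?thesis unfolding in_col_span_def
  proof (rule exI[of _ c], intro allI impI)
    fix r assume r: "r < n"
    have "c 0 = c0" "c k = ck" using k_facts by (auto simp: c_def)
    have "r = 0 \<or> r = k \<or> r = m \<or> r \<in> R" using r k_facts by (auto simp: R_def)
    then show "M a b r i * M a b r j = (\<Sum>s<n. c s * M a b r s)"
    proof (elim disjE)
      assume "r = 0"
      thus ?thesis using col_comb_row[OF r, of c a b] sa cm e(2) k_facts \<open>c 0 = c0\<close> \<open>c k = ck\<close>
        by (cases "i = j \<and> i \<in> R") (simp_all add: diag_def algebra_simps power2_eq_square power3_eq_cube)
    next
      assume "r = k"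
      thus ?thesis using col_comb_row[OF r, of c a b] sb cm e(1) k_facts \<open>c k = ck\<close>
        by (simp add: diag_def algebra_simps power2_eq_square)
    next
      assume "r = m"
      thus ?thesis using col_comb_row[OF r, of c a b] cm M_entry[OF r, of i a b] M_entry[OF r, of j a b] ij k_facts
        by auto
    next
      assume rR: "r \<in> R"
      thus ?thesis using col_comb_row[OF r, of c a b] cm cR[OF rR] M_entry[OF r, of i a b] M_entry[OF r, of j a b]
        ij R_bounds[OF rR] by (auto simp: diag_def)
    qed
  qed
qed

lemma in_col_span_prod_iff:
  assumes ab: "(a,b) \<in> params" and ij: "i < m" "j < m"
  shows "in_col_span n (M a b) (\<lambda>r. M a b r i * M a b r j) \<longleftrightarrow> col_prod_cond a b i j"
  using in_col_span_prod_imp_col_prod_cond col_prod_cond_imp_in_col_span_prod assms by blast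

definition closure_cond :: "(nat \<Rightarrow> int) \<Rightarrow> (nat \<Rightarrow> int) \<Rightarrow> bool" where
  "closure_cond a b \<longleftrightarrow> p dvd a k \<and> (\<forall>i\<in>R. \<forall>j\<in>R. i \<noteq> j \<longrightarrow> p^2 dvd p * a i * a j - a k * b i * b j) \<and>
     (\<forall>i\<in>R. p^2 dvd p * (a i^2 - a i) - a k * (b i^2 - b i))"

lemma p_nonzero: "p \<noteq> 0" using p_ge_2 by simp

lemma M_row0: "i < m \<Longrightarrow> M a b 0 i = (if i = 0 then p^3 else 0) + p * a i"
  using M_entry[of 0 i a b] k_facts by (simp add: diag_def)
lemma M_rowk: "i < m \<Longrightarrow> M a b k i = (if i = k then p^2 else 0) + p * b i"
  using M_entry[of k i a b] k_facts by (simp add: diag_def)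

lemma mult_p2_cancel: "p^2 * x = p^2 * y \<Longrightarrow> x = y" using p_nonzero by simp
lemma mult_p_cancel: "p * x = p * y \<Longrightarrow> x = y" using p_nonzero by simp

lemma col_prod_cond_k_k_imp_dvd:
  assumes ab: "(a,b) \<in> params" and "col_prod_cond a b k k" shows "p dvd a k"
proof -
  obtain ck c0 where e: "M a b k k * M a b k k = p^2 * ck + p^2 * b k"
      "M a b 0 k * M a b 0 k = p^3 * c0 + p * a k * ck"
    using assms(2) k_notin_R unfolding col_prod_cond_def by auto
  have "p^2 * p^2 = p^2 * ck" using e(1) M_rowk[of k a b] params_zero[OF ab] k_facts by simp
  hence ck: "ck = p^2" using mult_p2_cancel by metis
  have "p^2 * (a k * a k) = p^2 * (p * c0 + p * a k)"
    using e(2) M_row0[of k a b] k_facts ck by (simp add: algebra_simps power2_eq_square power3_eq_cube)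
  hence "a k * a k = p * (c0 + a k)" using mult_p2_cancel by (metis distrib_left)
  hence "p dvd a k * a k" by simp
  thus ?thesis using p_dvd_mult_iff by blast
qed

lemma col_prod_cond_off_diag_imp:
  assumes "i \<in> R" "j \<in> R" "i \<noteq> j" "col_prod_cond a b i j"
  shows "p^2 dvd p * a i * a j - a k * b i * b j"
proof -
  have f: "i < m" "j < m" "i \<noteq> 0" "j \<noteq> 0" "i \<noteq> k" "j \<noteq> k" using R_bounds assms by auto
  obtain ck c0 where e: "M a b k i * M a b k j = p^2 * ck" "M a b 0 i * M a b 0 j = p^3 * c0 + p * a k * ck"
    using assms(3,4) unfolding col_prod_cond_def by auto
  have "p^2 * (b i * b j) = p^2 * ck" using e(1) M_rowk f by (simp add: algebra_simps power2_eq_square)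
  hence ck: "ck = b i * b j" using mult_p2_cancel by metis
  have "p * (p * a i * a j - a k * b i * b j) = p * (p^2 * c0)"
    using e(2) M_row0 f ck by (simp add: algebra_simps power2_eq_square power3_eq_cube)
  hence "p * a i * a j - a k * b i * b j = p^2 * c0" using mult_p_cancel by metis
  thus ?thesis by simp
qed

lemma col_prod_cond_diag_imp:
  assumes "i \<in> R" "col_prod_cond a b i i"
  shows "p^2 dvd p * (a i^2 - a i) - a k * (b i^2 - b i)"
proof -
  have f: "i < m" "i \<noteq> 0" "i \<noteq> k" using R_bounds assms by auto
  obtain ck c0 where e: "M a b k i * M a b k i = p^2 * ck + p^2 * b i"
      "M a b 0 i * M a b 0 i = p^3 * c0 + p^2 * a i + p * a k * ck"
    using assms unfolding col_prod_cond_def by auto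
  have "p^2 * (b i * b i) = p^2 * (ck + b i)" using e(1) M_rowk f by (simp add: algebra_simps power2_eq_square)
  hence ck: "ck = b i^2 - b i" using mult_p2_cancel by (simp add: power2_eq_square) (metis add_diff_cancel_right')
  have "p * (p * (a i^2 - a i) - a k * (b i^2 - b i)) = p * (p^2 * c0)"
    using e(2) M_row0 f ck by (simp add: algebra_simps power2_eq_square power3_eq_cube)
  hence "p * (a i^2 - a i) - a k * (b i^2 - b i) = p^2 * c0" using mult_p_cancel by metis
  thus ?thesis by simp
qed

lemma closure_imp_closure_cond:
  assumes ab: "(a,b) \<in> params" and all: "\<forall>i<m. \<forall>j<m. col_prod_cond a b i j"
  shows "closure_cond a b"
  using col_prod_cond_k_k_imp_dvd[OF ab] col_prod_cond_off_diag_imp col_prod_cond_diag_imp all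
    k_facts R_bounds unfolding closure_cond_def by blast

lemma p_square_dvd_mult_imp: "p^2 dvd p * X \<Longrightarrow> \<exists>q. X = p * q"
proof -
  assume "p^2 dvd p * X"
  then obtain q where "p * X = p^2 * q" by (auto elim: dvdE)
  hence "p * X = p * (p * q)" by (simp add: power2_eq_square)
  hence "X = p * q" using mult_p_cancel by blast
  thus ?thesis by blast
qed

lemma closure_cond_imp_col_prod_cond:
  assumes ab: "(a,b) \<in> params" and c: "closure_cond a b" and ij: "i < m" "j < m"
  shows "col_prod_cond a b i j"
proof -
  have dz: "b 0 = 0" "b k = 0" "a 0 = 0" using params_zero[OF ab] by auto
  have "p dvd a k" using c by (simp add: closure_cond_def)
  then obtain t where t: "a k = p * t" by (rule dvdE)
  have zR: "0 \<notin> R" by (simp add: R_def)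
  have positions: "i = 0 \<or> j = 0 \<or> (i = k \<and> j = k) \<or> (i = k \<and> j \<in> R) \<or> (i \<in> R \<and> j = k) \<or> (i \<in> R \<and> j \<in> R)"
    using ij by (auto simp: R_def)
  consider "i = 0" | "i \<noteq> 0" "j = 0" | "i = k" "j = k" | "i = k" "j \<in> R" | "i \<in> R" "j = k"
    | "i \<in> R" "j \<in> R" "i \<noteq> j" | "i \<in> R" "j = i" using positions by blast
  then show ?thesis
  proof cases
    case 1
    show ?thesis unfolding col_prod_cond_def
      by (rule exI[of _ 0], rule exI[of _ "M a b 0 j"]) (use 1 ij dz zR k_facts in \<open>simp add: M_row0 M_rowk\<close>)
  next
    case 2
    show ?thesis unfolding col_prod_cond_def
      by (rule exI[of _ 0], rule exI[of _ "M a b 0 i"]) (use 2 ij dz zR k_facts in \<open>simp add: M_row0 M_rowk\<close>)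
  next
    case 3
    show ?thesis unfolding col_prod_cond_def
      by (rule exI[of _ "p^2"], rule exI[of _ "p * t^2 - p * t"])
        (use 3 ij dz k_notin_R k_facts t in \<open>simp add: M_row0 M_rowk algebra_simps power2_eq_square power3_eq_cube\<close>)
  next
    case 4
    have f: "j \<noteq> 0" "j \<noteq> k" using R_bounds 4 by auto
    show ?thesis unfolding col_prod_cond_def
      by (rule exI[of _ "p * b j"], rule exI[of _ "t * a j - t * b j"])
        (use 4 f ij dz k_facts t in \<open>simp add: M_row0 M_rowk algebra_simps power2_eq_square power3_eq_cube\<close>)
  next
    case 5
    have f: "i \<noteq> 0" "i \<noteq> k" using R_bounds 5 by auto
    show ?thesis unfolding col_prod_cond_def
      by (rule exI[of _ "p * b i"], rule exI[of _ "t * a i - t * b i"])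
        (use 5 f ij dz k_facts t in \<open>simp add: M_row0 M_rowk algebra_simps power2_eq_square power3_eq_cube\<close>)
  next
    case 6
    have f: "i \<noteq> 0" "i \<noteq> k" "j \<noteq> 0" "j \<noteq> k" using R_bounds 6 by auto
    have "p^2 dvd p * (a i * a j - t * b i * b j)"
      using c 6 t unfolding closure_cond_def by (simp add: algebra_simps)
    then obtain q where q: "a i * a j - t * b i * b j = p * q" using p_square_dvd_mult_imp by blast
    show ?thesis unfolding col_prod_cond_def
      by (rule exI[of _ "b i * b j"], rule exI[of _ q])
        (use 6 f ij t q in \<open>simp add: M_row0 M_rowk algebra_simps power2_eq_square power3_eq_cube\<close>)
  next
    case 7
    have f: "i \<noteq> 0" "i \<noteq> k" using R_bounds 7 by auto
    have "p^2 dvd p * (a i^2 - a i - t * (b i^2 - b i))"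
      using c 7 t unfolding closure_cond_def by (simp add: algebra_simps)
    then obtain q where q: "a i^2 - a i - t * (b i^2 - b i) = p * q" using p_square_dvd_mult_imp by blast
    have q2: "a i * a i = a i + t * (b i * b i - b i) + p * q" using q by (simp add: power2_eq_square algebra_simps)
    have "M a b 0 i * M a b 0 j = p^2 * (a i * a i)" using 7 f ij by (simp add: M_row0 power2_eq_square)
    also have "\<dots> = p^3 * q + (if i = j \<and> i \<in> R then p^2 * a i else 0) + p * a k * (b i^2 - b i)"
      unfolding q2 using 7 t by (simp add: algebra_simps power2_eq_square power3_eq_cube)
    finally show ?thesis unfolding col_prod_cond_def
      by (intro exI[of _ "b i^2 - b i"] exI[of _ q] conjI) (use 7 f ij in \<open>simp_all add: M_rowk algebra_simps power2_eq_square\<close>)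
  qed
qed

abbreviation comp :: "nat list" where "comp \<equiv> S32_comp n k"

lemma length_comp: "length comp = m" by (simp add: S32_comp_def)
lemma nth_comp: "r < m \<Longrightarrow> comp ! r = (if r = 0 then 3 else if r = k then 2 else 1)"
  by (simp add: S32_comp_def)
lemma length_comp_Suc: "length comp + 1 = n" using length_comp k_facts by simp

definition closed_params :: "((nat \<Rightarrow> int) \<times> (nat \<Rightarrow> int)) set" where
  "closed_params = {(a,b). (a,b) \<in> params \<and> closure_cond a b}"

definition shape :: "(nat \<Rightarrow> nat \<Rightarrow> int) \<Rightarrow> bool" where
  "shape A \<longleftrightarrow> (\<forall>r s. (n \<le> r \<or> n \<le> s) \<longrightarrow> A r s = 0) \<and>
       (\<forall>r<n. \<forall>s<r. A r s = 0) \<and>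
       (\<forall>r<n - 1. A r r = p ^ (comp ! r)) \<and>
       A (n - 1) (n - 1) = 1 \<and>
       (\<forall>r<n. A r (n - 1) = 1) \<and>
       (\<forall>r s. r < s \<and> s < n - 1 \<longrightarrow> p dvd A r s \<and> 0 \<le> A r s \<and> A r s < p ^ (comp ! r))"

lemma irred_subring_matrix_comp_iff: "irred_subring_matrix comp pn A \<longleftrightarrow> shape A \<and> (\<forall>i<n. \<forall>j<n. in_col_span n A (\<lambda>r. A r i * A r j))"
  unfolding irred_subring_matrix_def shape_def Let_def length_comp_Suc by simp

lemma diag_comp: "r < m \<Longrightarrow> diag r = p ^ (comp ! r)"
  by (simp add: diag_def nth_comp)

lemma shape_M: assumes ab: "(a,b) \<in> params" shows "shape (M a b)"
proof -
  have dz: "\<And>s. s \<notin> R \<Longrightarrow> s \<noteq> k \<Longrightarrow> a s = 0" "\<And>s. s \<notin> Q \<Longrightarrow> b s = 0" "a 0 = 0" "a m = 0"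
    "b 0 = 0" "b k = 0" "b m = 0" using params_zero[OF ab] by auto
  have ar: "\<And>s. 0 \<le> a s \<and> a s < p^2" using ab p_ge_2 by (auto simp: params_def Pi0_def)
  have br: "\<And>s. 0 \<le> b s \<and> b s < p" using ab p_ge_2 by (auto simp: params_def Pi0_def)
  have c1: "\<forall>r s. (n \<le> r \<or> n \<le> s) \<longrightarrow> M a b r s = 0" by (simp add: M_def)
  have c2: "\<forall>r<n. \<forall>s<r. M a b r s = 0"
  proof (intro allI impI)
    fix r s assume rs: "r < n" "s < r"
    have "s < m" using rs k_facts by simp
    hence e: "M a b r s = (if r = 0 then p * a s else 0) + (if r = k then p * b s else 0)"
      using M_entry[of r s a b] rs by simp
    have "r \<noteq> 0" using rs by simp
    moreover have "r = k \<Longrightarrow> b s = 0" using rs dz(2) by (auto simp: Q_def)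
    ultimately show "M a b r s = 0" using e by simp
  qed
  have c3: "\<forall>r<n - 1. M a b r r = p ^ (comp ! r)"
  proof (intro allI impI)
    fix r assume r: "r < n - 1"
    thus "M a b r r = p ^ (comp ! r)" using dz k_facts diag_comp by (auto simp: M_def)
  qed
  have c4: "M a b (n - 1) (n - 1) = 1" using k_facts dz by (simp add: M_def)
  have c5: "\<forall>r<n. M a b r (n - 1) = 1" using dz k_facts by (auto simp: M_def)
  have c6: "\<forall>r s. r < s \<and> s < n - 1 \<longrightarrow> p dvd M a b r s \<and> 0 \<le> M a b r s \<and> M a b r s < p ^ (comp ! r)"
  proof (intro allI impI)
    fix r s assume rs: "r < s \<and> s < n - 1"
    have e: "M a b r s = (if r = 0 then p * a s else 0) + (if r = k then p * b s else 0)"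
      using rs k_facts by (auto simp: M_def)
    show "p dvd M a b r s \<and> 0 \<le> M a b r s \<and> M a b r s < p ^ (comp ! r)"
    proof (cases "r = 0")
      case True
      have "p * a s < p * p^2" using ar[of s] p_ge_2 by simp
      thus ?thesis using True e ar[of s] p_ge_2 nth_comp[of 0] k_facts by (simp add: power3_eq_cube power2_eq_square)
    next
      case False
      show ?thesis
      proof (cases "r = k")
        case True
        have "p * b s < p * p" using br[of s] p_ge_2 by simp
        thus ?thesis using True False e br[of s] p_ge_2 nth_comp[of k] k_facts by (simp add: power2_eq_square)
      next
        case False
        thus ?thesis using \<open>r \<noteq> 0\<close> e p_ge_2 by simp
      qed
    qed
  qed
  show ?thesis unfolding shape_def using c1 c2 c3 c4 c5 c6 by blast
qed

lemma shape_imp_M: assumes "shape A" shows "\<exists>a b. (a,b) \<in> params \<and> A = M a b"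
proof -
  have h1: "\<And>r s. (n \<le> r \<or> n \<le> s) \<Longrightarrow> A r s = 0" and h2: "\<And>r s. r < n \<Longrightarrow> s < r \<Longrightarrow> A r s = 0"
    and h3: "\<And>r. r < m \<Longrightarrow> A r r = p ^ (comp ! r)" and h5: "\<And>r. r < n \<Longrightarrow> A r m = 1"
    and h6: "\<And>r s. r < s \<Longrightarrow> s < m \<Longrightarrow> p dvd A r s \<and> 0 \<le> A r s \<and> A r s < p ^ (comp ! r)"
    using assms unfolding shape_def by auto
  define a where "a s = (if s \<in> {1..<m} then A 0 s div p else 0)" for s
  define b where "b s = (if s \<in> Q then A k s div p else 0)" for s
  have "0 \<le> A 0 s div p \<and> A 0 s div p < p^2" if "s \<in> {1..<m}" for s
    using div_range_if_dvd[of p "A 0 s" "p^2"] h6[of 0 s] that nth_comp[of 0] k_facts p_ge_2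
    by (simp add: power3_eq_cube power2_eq_square)
  moreover have "0 \<le> A k s div p \<and> A k s div p < p" if "s \<in> Q" for s
    using div_range_if_dvd[of p "A k s" p] h6[of k s] that nth_comp[of k] k_facts p_ge_2
    by (simp add: power2_eq_square Q_def)
  ultimately have ab: "(a,b) \<in> params" by (auto simp: params_def Pi0_def a_def b_def)
  have "A r s = M a b r s" for r s
  proof -
    consider "n \<le> r \<or> n \<le> s" | "r < n" "s = m" | "s < r" "r < n" | "r = s" "s < m"
      | "r < s" "s < m" by linarith
    thus ?thesis
    proof cases
      case 5
      have hh: "p dvd A r s \<and> 0 \<le> A r s \<and> A r s < p ^ (comp ! r)" using h6[OF 5] .
      have "A r s = 0" if "r \<noteq> 0" "r \<noteq> k"
        using hh residue_dvd_iff nth_comp[of r] that 5 by (metis less_trans power_one_right)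
      thus ?thesis using 5 hh k_facts by (auto simp: M_def a_def b_def Q_def)
    qed (use h1 h2 h3 h5 diag_comp k_facts in \<open>auto simp: M_def a_def b_def Q_def\<close>)
  qed
  thus ?thesis using ab by blast
qed

lemma closure_M_iff: assumes ab: "(a,b) \<in> params"
  shows "(\<forall>i<n. \<forall>j<n. in_col_span n (M a b) (\<lambda>r. M a b r i * M a b r j)) \<longleftrightarrow> closure_cond a b"
proof
  assume "\<forall>i<n. \<forall>j<n. in_col_span n (M a b) (\<lambda>r. M a b r i * M a b r j)"
  hence "\<forall>i<m. \<forall>j<m. col_prod_cond a b i j" using in_col_span_prod_iff[OF ab] k_facts by auto
  thus "closure_cond a b" using closure_imp_closure_cond[OF ab] by blast
next
  assume c: "closure_cond a b"
  have one: "\<And>r. r < n \<Longrightarrow> M a b r m = 1" using k_facts params_zero[OF ab] by (auto simp: M_def)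
  show "\<forall>i<n. \<forall>j<n. in_col_span n (M a b) (\<lambda>r. M a b r i * M a b r j)"
  proof (intro allI impI)
    fix i j assume ij: "i < n" "j < n"
    consider "i = m" | "j = m" | "i < m" "j < m" using ij by linarith
    thus "in_col_span n (M a b) (\<lambda>r. M a b r i * M a b r j)"
    proof cases
      case 1
      thus ?thesis using in_col_span_column[OF ij(2), of "M a b"] one unfolding in_col_span_def by simp
    next
      case 2
      thus ?thesis using in_col_span_column[OF ij(1), of "M a b"] one unfolding in_col_span_def by simp
    next
      case 3
      thus ?thesis using in_col_span_prod_iff[OF ab] closure_cond_imp_col_prod_cond[OF ab c] by blast
    qed
  qed
qed

lemma irred_subring_matrices_eq: "{A. irred_subring_matrix comp pn A} = (\<lambda>(a,b). M a b) ` closed_params"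
proof (rule set_eqI, rule iffI)
  fix A assume "A \<in> {A. irred_subring_matrix comp pn A}"
  hence s: "shape A" and c: "\<forall>i<n. \<forall>j<n. in_col_span n A (\<lambda>r. A r i * A r j)" using irred_subring_matrix_comp_iff by auto
  obtain a b where ab: "(a,b) \<in> params" "A = M a b" using shape_imp_M[OF s] by blast
  have "closure_cond a b" using closure_M_iff[OF ab(1)] c ab(2) by simp
  thus "A \<in> (\<lambda>(a,b). M a b) ` closed_params" using ab by (auto simp: closed_params_def)
next
  fix A assume "A \<in> (\<lambda>(a,b). M a b) ` closed_params"
  then obtain a b where ab: "(a,b) \<in> params" "closure_cond a b" "A = M a b" by (auto simp: closed_params_def)
  show "A \<in> {A. irred_subring_matrix comp pn A}"
    using irred_subring_matrix_comp_iff shape_M[OF ab(1)] closure_M_iff[OF ab(1)] ab(2,3) by simp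
qed

lemma M_row0_upper: "s \<in> {1..<m} \<Longrightarrow> M a b 0 s = p * a s"
  using M_entry[of 0 s a b] k_facts by simp
lemma M_rowk_upper: "s \<in> Q \<Longrightarrow> M a b k s = p * b s"
  using M_entry[of k s a b] k_facts by (simp add: Q_def)

lemma inj_on_M: "inj_on (\<lambda>(a,b). M a b) closed_params"
proof (rule inj_onI)
  fix x y assume x: "x \<in> closed_params" and y: "y \<in> closed_params" and e: "(\<lambda>(a,b). M a b) x = (\<lambda>(a,b). M a b) y"
  obtain a b where xa: "x = (a,b)" by (cases x) auto
  obtain a' b' where ya: "y = (a',b')" by (cases y) auto
  have d1: "(a,b) \<in> params" "(a',b') \<in> params" using x y xa ya by (auto simp: closed_params_def)
  have E: "M a b = M a' b'" using e xa ya by simp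
  have "a = a'"
  proof
    fix s show "a s = a' s"
    proof (cases "s \<in> {1..<m}")
      case True
      have "M a b 0 s = M a' b' 0 s" using E by simp
      hence "p * a s = p * a' s" using True by (simp add: M_row0_upper)
      thus ?thesis using mult_p_cancel by blast
    next
      case False thus ?thesis using d1 by (auto simp: params_def Pi0_def)
    qed
  qed
  moreover have "b = b'"
  proof
    fix s show "b s = b' s"
    proof (cases "s \<in> Q")
      case True
      have "M a b k s = M a' b' k s" using E by simp
      hence "p * b s = p * b' s" using True by (simp add: M_rowk_upper)
      thus ?thesis using mult_p_cancel by blast
    next
      case False thus ?thesis using d1 by (auto simp: params_def Pi0_def)
    qed
  qed
  ultimately show "x = y" using xa ya by simp
qed

lemma g_comp: "g comp pn = card closed_params"
  unfolding g_def irred_subring_matrices_eq using inj_on_M by (rule card_image)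


lemma R_split: "R = P \<union> Q" "P \<inter> Q = {}" using k_facts by (auto simp: R_def P_def Q_def)

lemma card_R: "card R = n - 3"
proof -
  have "card R = card {1..<m} - card {k}" unfolding R_def using k_facts by (subst card_Diff_subset) auto
  thus ?thesis using k_facts by simp
qed

lemma orth_sys_R_iff: assumes "y \<in> Pi0 Q {0..<p}"
  shows "orth_sys R x u y \<longleftrightarrow> orth_idem_on P Q x \<and> orth_sys Q x u y"
proof -
  have "\<forall>i\<in>P. y i = 0" using assms R_split by (auto simp: Pi0_def)
  thus ?thesis unfolding R_split(1) using orth_sys_union_iff R_split(2) by blast
qed

text \<open>\<open>a\<^sub>k = p u\<close>, and \<open>a\<^sub>i = x\<^sub>i + p h\<^sub>i\<close> (\<open>i \<in> R\<close>) splits \<open>a\<^sub>i\<close> into its two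
  base-\<open>p\<close> digits.\<close>

definition lift_vec :: "(nat \<Rightarrow> int) \<Rightarrow> int \<Rightarrow> (nat \<Rightarrow> int) \<Rightarrow> nat \<Rightarrow> int" where
  "lift_vec x u h = (\<lambda>i. if i = k then p * u else x i + p * h i)"

definition lift ::
  "((nat \<Rightarrow> int) \<times> int \<times> (nat \<Rightarrow> int)) \<times> (nat \<Rightarrow> int) \<Rightarrow> (nat \<Rightarrow> int) \<times> (nat \<Rightarrow> int)" where
  "lift = (\<lambda>((x, u, y), h). (lift_vec x u h, y))"

definition unlift ::
  "(nat \<Rightarrow> int) \<times> (nat \<Rightarrow> int) \<Rightarrow> ((nat \<Rightarrow> int) \<times> int \<times> (nat \<Rightarrow> int)) \<times> (nat \<Rightarrow> int)" where
  "unlift = (\<lambda>(a, b). ((\<lambda>i. if i \<in> R then a i mod p else 0, a k div p, b), \<lambda>i. if i \<in> R then a i div p else 0))"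

lemma p_square_dvd_iff: "p^2 dvd p * X \<longleftrightarrow> p dvd X"
  using p_nonzero by (simp add: power2_eq_square)

lemma closure_cond_lift: "closure_cond (lift_vec x u h) y \<longleftrightarrow> orth_sys R x u y"
proof -
  let ?a = "lift_vec x u h"
  have aR: "\<And>i. i \<in> R \<Longrightarrow> ?a i = x i + p * h i" using k_notin_R by (auto simp: lift_vec_def)
  have ak: "?a k = p * u" by (simp add: lift_vec_def)
  have e1: "\<And>i j. i \<in> R \<Longrightarrow> j \<in> R \<Longrightarrow> p^2 dvd p * ?a i * ?a j - ?a k * y i * y j \<longleftrightarrow> p dvd x i * x j - u * y i * y j"
  proof -
    fix i j assume "i \<in> R" "j \<in> R"
    hence "p * ?a i * ?a j - ?a k * y i * y j = p * ((x i + p * h i) * (x j + p * h j) - u * y i * y j)"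
      using aR ak by (simp add: algebra_simps)
    hence "p^2 dvd p * ?a i * ?a j - ?a k * y i * y j \<longleftrightarrow> p dvd (x i + p * h i) * (x j + p * h j) - u * y i * y j"
      using p_square_dvd_iff by simp
    also have "\<dots> \<longleftrightarrow> p dvd x i * x j - u * y i * y j"
      by (rule dvd_iff_if_dvd_diff) (simp add: algebra_simps)
    finally show "p^2 dvd p * ?a i * ?a j - ?a k * y i * y j \<longleftrightarrow> p dvd x i * x j - u * y i * y j" .
  qed
  have e2: "\<And>i. i \<in> R \<Longrightarrow> p^2 dvd p * (?a i ^ 2 - ?a i) - ?a k * (y i ^ 2 - y i) \<longleftrightarrow> p dvd x i ^ 2 - x i - u * (y i ^ 2 - y i)"
  proof -
    fix i assume "i \<in> R"
    hence "p * (?a i ^ 2 - ?a i) - ?a k * (y i ^ 2 - y i) = p * ((x i + p * h i) ^ 2 - (x i + p * h i) - u * (y i ^ 2 - y i))"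
      using aR ak by (simp add: algebra_simps)
    hence "p^2 dvd p * (?a i ^ 2 - ?a i) - ?a k * (y i ^ 2 - y i) \<longleftrightarrow> p dvd (x i + p * h i) ^ 2 - (x i + p * h i) - u * (y i ^ 2 - y i)"
      using p_square_dvd_iff by simp
    also have "\<dots> \<longleftrightarrow> p dvd x i ^ 2 - x i - u * (y i ^ 2 - y i)"
      by (rule dvd_iff_if_dvd_diff) (simp add: algebra_simps power2_eq_square)
    finally show "p^2 dvd p * (?a i ^ 2 - ?a i) - ?a k * (y i ^ 2 - y i) \<longleftrightarrow> p dvd x i ^ 2 - x i - u * (y i ^ 2 - y i)" .
  qed
  show ?thesis unfolding closure_cond_def orth_sys_def using e1 e2 ak by simp
qed

lemma unlift_lift: assumes "t \<in> ext_orth_sols P Q \<times> Pi0 R {0..<p}" shows "unlift (lift t) = t"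
proof -
  obtain x u y h where t: "t = ((x, u, y), h)" by (metis prod.exhaust)
  have h: "x \<in> Pi0 R {0..<p}" "u \<in> {0..<p}" "h \<in> Pi0 R {0..<p}"
    using assms R_split by (auto simp: ext_orth_sols_def t)
  have "(\<lambda>i. if i \<in> R then lift_vec x u h i mod p else 0) = x"
    using h k_notin_R by (auto simp: Pi0_def lift_vec_def fun_eq_iff)
  moreover have "(\<lambda>i. if i \<in> R then lift_vec x u h i div p else 0) = h"
    using h k_notin_R p_nonzero by (auto simp: Pi0_def lift_vec_def fun_eq_iff)
  moreover have "lift_vec x u h k div p = u" using p_nonzero by (simp add: lift_vec_def)
  ultimately show ?thesis by (simp add: lift_def unlift_def t)
qed

lemma lift_unlift: assumes "s \<in> closed_params" shows "lift (unlift s) = s"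
proof -
  obtain a b where s: "s = (a, b)" by fastforce
  have ab: "(a, b) \<in> params" "p dvd a k" using assms by (auto simp: closed_params_def closure_cond_def s)
  have "a i = (if i = k then p * (a k div p) else (if i \<in> R then a i mod p else 0) + p * (if i \<in> R then a i div p else 0))" for i
    using params_zero(1)[OF ab(1), of i] ab(2) by (cases "i \<in> R") auto
  thus ?thesis by (simp add: lift_def unlift_def lift_vec_def fun_eq_iff s)
qed

lemma lift_vec_range:
  assumes "x \<in> Pi0 R {0..<p}" "u \<in> {0..<p}" "h \<in> Pi0 R {0..<p}"
  shows "lift_vec x u h \<in> Pi0 {1..<m} {0..<p^2}"
  unfolding Pi0_def
proof (intro CollectI conjI allI impI ballI)
  fix i assume i: "i \<in> {1..<m}"
  show "lift_vec x u h i \<in> {0..<p^2}"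
  proof (cases "i = k")
    case True thus ?thesis using assms(2) p_ge_2 by (auto simp: power2_eq_square lift_vec_def)
  next
    case False
    hence "i \<in> R" using i by (auto simp: R_def)
    hence r: "0 \<le> x i" "x i < p" "0 \<le> h i" "h i \<le> p - 1" using assms(1,3) by (auto simp: Pi0_def)
    have "p * h i \<le> p * (p - 1)" using r(4) p_ge_2 by (intro mult_left_mono) auto
    hence "x i + p * h i < p^2" using r(2) by (simp add: power2_eq_square algebra_simps)
    thus ?thesis using False r p_ge_2 by (simp add: lift_vec_def)
  qed
next
  fix i assume "i \<notin> {1..<m}"
  hence "i \<notin> R" "i \<noteq> k" using k_facts by (auto simp: R_def)
  thus "lift_vec x u h i = 0" using assms(1,3) by (auto simp: Pi0_def lift_vec_def)
qed

lemma lift_in_closed_params: assumes "t \<in> ext_orth_sols P Q \<times> Pi0 R {0..<p}" shows "lift t \<in> closed_params"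
proof -
  obtain x u y h where t: "t = ((x, u, y), h)" by (metis prod.exhaust)
  have h: "x \<in> Pi0 R {0..<p}" "u \<in> {0..<p}" "y \<in> Pi0 Q {0..<p}" "h \<in> Pi0 R {0..<p}"
    "orth_idem_on P Q x" "orth_sys Q x u y" using assms R_split by (auto simp: ext_orth_sols_def t)
  have "closure_cond (lift_vec x u h) y"
    using closure_cond_lift orth_sys_R_iff[OF h(3)] h by blast
  thus ?thesis using lift_vec_range[OF h(1,2,4)] h(3)
    by (simp add: lift_def closed_params_def params_def t)
qed

lemma unlift_in_ext_orth_sols: assumes "s \<in> closed_params" shows "unlift s \<in> ext_orth_sols P Q \<times> Pi0 R {0..<p}"
proof -
  obtain a b where s: "s = (a, b)" by fastforce
  define x where "x = (\<lambda>i. if i \<in> R then a i mod p else 0)"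
  define h where "h = (\<lambda>i. if i \<in> R then a i div p else 0)"
  define u where "u = a k div p"
  have ab: "(a, b) \<in> params" "closure_cond a b" using assms by (auto simp: closed_params_def s)
  have "0 \<le> a i \<and> a i < p * p" for i
    using ab(1) p_ge_2 by (auto simp: params_def Pi0_def power2_eq_square)
  hence digits: "0 \<le> a i div p \<and> a i div p < p" for i
    using div_less_if_less_square[of p] p_ge_2 by (simp add: pos_imp_zdiv_nonneg_iff)
  have "lift (unlift s) = s" using assms by (rule lift_unlift)
  hence "closure_cond (lift_vec x u h) b"
    using ab(2) by (simp add: lift_def unlift_def x_def h_def u_def s)
  hence "orth_sys R x u b" using closure_cond_lift by blast
  moreover have b: "b \<in> Pi0 Q {0..<p}" using ab(1) by (simp add: params_def)
  ultimately have "orth_idem_on P Q x \<and> orth_sys Q x u b" using orth_sys_R_iff by blast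
  moreover have "x \<in> Pi0 (P \<union> Q) {0..<p}" using p_ge_2 R_split by (auto simp: x_def Pi0_def)
  moreover have "h \<in> Pi0 R {0..<p}" using digits by (auto simp: h_def Pi0_def)
  moreover have "u \<in> {0..<p}" using digits by (simp add: u_def)
  ultimately show ?thesis using b by (simp add: ext_orth_sols_def unlift_def x_def h_def u_def s)
qed

lemma card_closed_params: "card closed_params = card (ext_orth_sols P Q) * pn ^ (n - 3)"
proof -
  have "bij_betw lift (ext_orth_sols P Q \<times> Pi0 R {0..<p}) closed_params"
    by (rule bij_betw_byWitness[where f' = unlift])
      (auto simp: unlift_lift lift_unlift image_subset_iff lift_in_closed_params unlift_in_ext_orth_sols)
  hence "card closed_params = card (ext_orth_sols P Q) * card (Pi0 R {0..<p})"
    by (metis bij_betw_same_card card_cartesian_product)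
  also have "card (Pi0 R {0..<p}) = pn ^ (n - 3)"
    using card_Pi0[of R "{0..<p}"] card_R by (simp add: R_def)
  finally show ?thesis .
qed

lemma g_comp_eq:
  "real (g comp pn) = real pn ^ (n - 3) * (orth_sols_count (real pn) (n - 2 - k) + real (k - 1) * x_zero_sols_count (real pn) (n - 2 - k))"
proof -
  have fin: "finite Q" "finite P" by (simp_all add: Q_def P_def)
  have "g comp pn = (card (orth_sols Q) + card P * card (x_zero_sols Q)) * pn ^ (n - 3)"
    using g_comp card_closed_params card_ext_orth_sols[OF fin(2,1) R_split(2)] by simp
  hence "real (g comp pn) = real pn ^ (n - 3) * (real (card (orth_sols Q)) + real (card P) * real (card (x_zero_sols Q)))"
    by (simp add: algebra_simps)
  moreover have "card Q = n - 2 - k" "card P = k - 1" by (simp_all add: Q_def P_def)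
  ultimately show ?thesis using card_orth_sols[OF fin(1)] card_x_zero_sols[OF fin(1)] by simp
qed

end

section \<open>Summation over the position of the entry 2\<close>

lemma sum_x_zero_sols_count: "2 * (p - 1) * (\<Sum>B\<le>N. x_zero_sols_count p B) = 2 * (p^(N+1) - 1) + (p - 1)^2 * (real N + 1) * (real N + 2)"
proof (induction N)
  case 0 thus ?case by (simp add: x_zero_sols_count_def power2_eq_square algebra_simps)
next
  case (Suc N)
  have "2 * (p - 1) * (\<Sum>B\<le>Suc N. x_zero_sols_count p B) = 2 * (p - 1) * (\<Sum>B\<le>N. x_zero_sols_count p B) + 2 * (p - 1) * x_zero_sols_count p (Suc N)"
    by (simp add: algebra_simps)
  also have "\<dots> = 2 * (p^(N+1) - 1) + (p - 1)^2 * (real N + 1) * (real N + 2) + 2 * (p - 1) * x_zero_sols_count p (Suc N)"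
    using Suc by simp
  also have "\<dots> = 2 * (p^(Suc N+1) - 1) + (p - 1)^2 * (real (Suc N) + 1) * (real (Suc N) + 2)"
    by (simp add: x_zero_sols_count_def power2_eq_square algebra_simps)
  finally show ?case .
qed

definition closed_form :: "real \<Rightarrow> nat \<Rightarrow> real" where
  "closed_form p N = 6 * (real N + 2) * p^(N+1) + (real N + 2) * (real N + 1) * real N * p^3
     - 3 * (real N + 2) * (real N + 1) * (real N - 1) * p^2 + (real N + 2) * (real N + 1) * (5 * real N - 9) * p
     - 3 * (real N + 2) * real N * (real N - 1)"

lemma sum_counts_closed: "6 * (p - 1) * (\<Sum>B\<le>N. orth_sols_count p B + (real N - real B) * x_zero_sols_count p B) = closed_form p N"
proof (induction N)
  case 0 thus ?case by (simp add: orth_sols_count_def x_zero_sols_count_def closed_form_def algebra_simps power2_eq_square power3_eq_cube)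
next
  case (Suc N)
  have e: "(\<Sum>B\<le>Suc N. orth_sols_count p B + (real (Suc N) - real B) * x_zero_sols_count p B)
      = (\<Sum>B\<le>N. orth_sols_count p B + (real N - real B) * x_zero_sols_count p B) + (\<Sum>B\<le>N. x_zero_sols_count p B) + orth_sols_count p (Suc N)"
  proof -
    have "(\<Sum>B\<le>Suc N. orth_sols_count p B + (real (Suc N) - real B) * x_zero_sols_count p B)
        = (\<Sum>B\<le>N. orth_sols_count p B + (real (Suc N) - real B) * x_zero_sols_count p B) + orth_sols_count p (Suc N)" by simp
    also have "(\<Sum>B\<le>N. orth_sols_count p B + (real (Suc N) - real B) * x_zero_sols_count p B)
        = (\<Sum>B\<le>N. (orth_sols_count p B + (real N - real B) * x_zero_sols_count p B) + x_zero_sols_count p B)"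
      by (rule sum.cong) (auto simp: algebra_simps)
    also have "\<dots> = (\<Sum>B\<le>N. orth_sols_count p B + (real N - real B) * x_zero_sols_count p B) + (\<Sum>B\<le>N. x_zero_sols_count p B)"
      by (simp add: sum.distrib)
    finally show ?thesis .
  qed
  have "6 * (p - 1) * (\<Sum>B\<le>Suc N. orth_sols_count p B + (real (Suc N) - real B) * x_zero_sols_count p B)
     = closed_form p N + 3 * (2 * (p - 1) * (\<Sum>B\<le>N. x_zero_sols_count p B)) + 6 * (p - 1) * orth_sols_count p (Suc N)"
    unfolding e using Suc by (simp add: algebra_simps)
  also have "\<dots> = closed_form p N + 3 * (2 * (p^(N+1) - 1) + (p - 1)^2 * (real N + 1) * (real N + 2)) + 6 * (p - 1) * orth_sols_count p (Suc N)"
    using sum_x_zero_sols_count by simp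
  also have "\<dots> = closed_form p (Suc N)"
    by (simp add: orth_sols_count_def closed_form_def field_simps power2_eq_square power3_eq_cube)
  finally show ?case .
qed

lemma S32_eq_image: assumes "3 \<le> n" shows "S32 n = S32_comp n ` {1..n-2}"
proof (rule set_eqI, rule iffI)
  fix \<alpha> assume "\<alpha> \<in> S32 n"
  then obtain k where h: "length \<alpha> = n - 1" "\<alpha> ! 0 = 3" "k \<in> {1..n-2}" "\<alpha> ! k = 2"
    "\<forall>i<n - 1. i \<noteq> 0 \<and> i \<noteq> k \<longrightarrow> \<alpha> ! i = 1" unfolding S32_def by blast
  have "\<alpha> = S32_comp n k"
  proof (rule nth_equalityI)
    show "length \<alpha> = length (S32_comp n k)" using h by (simp add: S32_comp_def)
    fix i assume "i < length \<alpha>"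
    thus "\<alpha> ! i = S32_comp n k ! i" using h by (auto simp: S32_comp_def)
  qed
  thus "\<alpha> \<in> S32_comp n ` {1..n-2}" using h by blast
next
  fix \<alpha> assume "\<alpha> \<in> S32_comp n ` {1..n-2}"
  then obtain k where k: "k \<in> {1..n-2}" "\<alpha> = S32_comp n k" by blast
  have "is_composition \<alpha>" using k by (auto simp: is_composition_def S32_comp_def)
  moreover have "length \<alpha> = n - 1" "\<alpha> ! 0 = 3" "\<alpha> ! k = 2" "\<forall>i<n - 1. i \<noteq> 0 \<and> i \<noteq> k \<longrightarrow> \<alpha> ! i = 1"
    using k assms by (auto simp: S32_comp_def)
  ultimately show "\<alpha> \<in> S32 n" unfolding S32_def using k(1) by blast
qed

lemma inj_on_S32_comp: assumes "3 \<le> n" shows "inj_on (S32_comp n) {1..n-2}"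
proof (rule inj_onI)
  fix k k' assume k: "k \<in> {1..n-2}" "k' \<in> {1..n-2}" "S32_comp n k = S32_comp n k'"
  hence "S32_comp n k ! k = S32_comp n k' ! k" by simp
  thus "k = k'" using k assms by (auto simp: S32_comp_def split: if_splits)
qed

lemma g_S32_comp:
  assumes "3 \<le> n" "k \<in> {1..n-2}" "prime p"
  shows "real (g (S32_comp n k) p) = real p ^ (n - 3) *
    (orth_sols_count (real p) (n - 2 - k) + real (k - 1) * x_zero_sols_count (real p) (n - 2 - k))"
proof -
  interpret S32_matrix p n k using assms by unfold_locales auto
  show ?thesis by (rule g_comp_eq)
qed

lemma sum_g_S32:
  assumes "prime p"
  shows "real (\<Sum>\<alpha>\<in>S32 (N + 3). g \<alpha> p) =
    real p ^ N * (\<Sum>B\<le>N. orth_sols_count (real p) B + (real N - real B) * x_zero_sols_count (real p) B)"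
proof -
  have "real (\<Sum>\<alpha>\<in>S32 (N + 3). g \<alpha> p) = (\<Sum>k\<in>{1..N+1}. real (g (S32_comp (N + 3) k) p))"
    unfolding S32_eq_image[of "N + 3", simplified] using inj_on_S32_comp[of "N + 3"] by (simp add: sum.reindex)
  also have "\<dots> = (\<Sum>k\<in>{1..N+1}. real p ^ N *
      (orth_sols_count (real p) (N + 1 - k) + real (k - 1) * x_zero_sols_count (real p) (N + 1 - k)))"
    using g_S32_comp[of "N + 3" _ p] assms by (intro sum.cong) auto
  also have "\<dots> = real p ^ N * (\<Sum>B\<le>N. orth_sols_count (real p) B + (real N - real B) * x_zero_sols_count (real p) B)"
    unfolding sum_distrib_left[symmetric]
    by (rule arg_cong[where f = "(*) _"], rule sum.reindex_bij_witness[where i = "\<lambda>B. N + 1 - B" and j = "\<lambda>k. N + 1 - k"])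
      (auto simp: of_nat_diff)
  finally show ?thesis .
qed

lemma closed_form_shift:
  "real p ^ N * closed_form (real p) N =
     6 * (real (N + 3) - 1) * real p ^ (2 * (N + 3) - 5)
     + (real (N + 3) - 1) * (real (N + 3) - 2) * (real (N + 3) - 3) * real p ^ (N + 3)
     - 3 * (real (N + 3) - 1) * (real (N + 3) - 2) * (real (N + 3) - 4) * real p ^ (N + 3 - 1)
     + (real (N + 3) - 1) * (real (N + 3) - 2) * (5 * real (N + 3) - 24) * real p ^ (N + 3 - 2)
     - 3 * (real (N + 3) - 1) * (real (N + 3) - 3) * (real (N + 3) - 4) * real p ^ (N + 3 - 3)"
proof -
  have e: "2 * (N + 3) - 5 = N + (N + 1)" "N + 3 - 1 = N + 2" "N + 3 - 2 = N + 1" "N + 3 - 3 = N"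
    by simp_all
  show ?thesis unfolding e
    by (simp add: closed_form_def power_add power2_eq_square power3_eq_cube algebra_simps)
qed

theorem corollary4p7:
  fixes n p :: nat
  assumes "n \<ge> 3" and "prime p"
  shows "real (\<Sum>\<alpha>\<in>S32 n. g \<alpha> p) =
    1 / (6 * (real p - 1)) *
      (6 * (real n - 1) * real p ^ (2 * n - 5)
       + (real n - 1) * (real n - 2) * (real n - 3) * real p ^ n
       - 3 * (real n - 1) * (real n - 2) * (real n - 4) * real p ^ (n - 1)
       + (real n - 1) * (real n - 2) * (5 * real n - 24) * real p ^ (n - 2)
       - 3 * (real n - 1) * (real n - 3) * (real n - 4) * real p ^ (n - 3))"
proof -
  obtain N where n: "n = N + 3" using assms(1) by (metis add.commute le_Suc_ex)
  have "real p - 1 \<noteq> 0" using prime_gt_1_nat[OF assms(2)] by simp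
  hence "real (\<Sum>\<alpha>\<in>S32 n. g \<alpha> p) = real p ^ N * closed_form (real p) N / (6 * (real p - 1))"
    using sum_g_S32[OF assms(2), of N] sum_counts_closed[of "real p" N] unfolding n
    by (simp add: field_simps)
  thus ?thesis unfolding closed_form_shift n by simp
qed

end
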